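(* Let $T$ be a c.n.u. contraction on $H$ and $\mathcal{N}:=\operatorname{span}\bigcup_{\lambda\in\mathbb{D}_+\cup\mathbb{D}_-}N_\lambda$. Then $\mathcal{N}$ is dense in $A_T^{\perp_s}$.
   Context: $H$ is an infinite-dimensional separable complex Hilbert space; $T\in\mathbb{B}(H)$, $\|T\|\le1$, is completely non-unitary (no nonzero invariant subspace on which $T$ is unitary). $\mathbb{K}=\ker(I-T^*T)$. $\mathbb{H}=H\oplus_\perp H$ with $[(x_1,x_2),(y_1,y_2)]=i(x_1,y_1)_H-i(x_2,y_2)_H$; $S^{\perp_s}=\{a:[a,b]=0\ \forall b\in S\}$; $A_T=\{(x,Tx):x\in\mathbb{K}\}$. $\mathbb{D}_\pm$ are two copies of the open unit disc. $N_\lambda=\{(x,\lambda x):x\in H\}\cap A_T^{\perp_s}$ for $\lambda\in\mathbb{D}_+$, and $N_\lambda=\{(\lambda x,x):x\in H\}\cap A_T^{\perp_s}$ for $\lambda\in\mathbb{D}_-$. *)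

theory Defs
  imports Complex_Main
begin

text \<open>Concrete model of the infinite-dimensional separable complex Hilbert space H:
  the sequence space l2(N) over the complex numbers (every such H is unitarily
  isomorphic to it). Inner product linear in the first argument.\<close>

definition l2 :: "(nat \<Rightarrow> complex) set" where
  "l2 = {x. summable (\<lambda>n. (cmod (x n))^2)}"

definition l2inner :: "(nat \<Rightarrow> complex) \<Rightarrow> (nat \<Rightarrow> complex) \<Rightarrow> complex" where
  "l2inner x y = (\<Sum>n. x n * cnj (y n))"

definition l2norm :: "(nat \<Rightarrow> complex) \<Rightarrow> real" where
  "l2norm x = sqrt (\<Sum>n. (cmod (x n))^2)"

definition sc :: "complex \<Rightarrow> (nat \<Rightarrow> complex) \<Rightarrow> (nat \<Rightarrow> complex)" where
  "sc a x = (\<lambda>n. a * x n)"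

definition is_contraction :: "((nat \<Rightarrow> complex) \<Rightarrow> (nat \<Rightarrow> complex)) \<Rightarrow> bool" where
  "is_contraction T \<longleftrightarrow>
     (\<forall>x\<in>l2. T x \<in> l2) \<and>
     (\<forall>x\<in>l2. \<forall>y\<in>l2. \<forall>a b. T (\<lambda>n. a * x n + b * y n) = (\<lambda>n. a * T x n + b * T y n)) \<and>
     (\<forall>x\<in>l2. l2norm (T x) \<le> l2norm x)"

definition adjoint :: "((nat \<Rightarrow> complex) \<Rightarrow> (nat \<Rightarrow> complex)) \<Rightarrow> (nat \<Rightarrow> complex) \<Rightarrow> (nat \<Rightarrow> complex)" where
  "adjoint T y = (THE z. z \<in> l2 \<and> (\<forall>x\<in>l2. l2inner (T x) y = l2inner x z))"

definition closed_subspace :: "(nat \<Rightarrow> complex) set \<Rightarrow> bool" where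
  "closed_subspace M \<longleftrightarrow> M \<subseteq> l2 \<and> (\<lambda>n. 0) \<in> M \<and>
     (\<forall>x\<in>M. \<forall>y\<in>M. \<forall>a b. (\<lambda>n. a * x n + b * y n) \<in> M) \<and>
     (\<forall>u x. (\<forall>k. u k \<in> M) \<and> x \<in> l2 \<and> (\<lambda>k. l2norm (\<lambda>n. u k n - x n)) \<longlonglongrightarrow> 0 \<longrightarrow> x \<in> M)"

definition cnu :: "((nat \<Rightarrow> complex) \<Rightarrow> (nat \<Rightarrow> complex)) \<Rightarrow> bool" where
  "cnu T \<longleftrightarrow> \<not> (\<exists>M. closed_subspace M \<and> M \<noteq> {\<lambda>n. 0} \<and> T ` M = M \<and>
                      (\<forall>x\<in>M. l2norm (T x) = l2norm x))"

definition KK :: "((nat \<Rightarrow> complex) \<Rightarrow> (nat \<Rightarrow> complex)) \<Rightarrow> (nat \<Rightarrow> complex) set" where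
  "KK T = {x \<in> l2. adjoint T (T x) = x}"

type_synonym kvec = "(nat \<Rightarrow> complex) \<times> (nat \<Rightarrow> complex)"

definition kspace :: "kvec set" where
  "kspace = l2 \<times> l2"

definition kform :: "kvec \<Rightarrow> kvec \<Rightarrow> complex" where
  "kform a b = \<i> * l2inner (fst a) (fst b) - \<i> * l2inner (snd a) (snd b)"

definition sorth :: "kvec set \<Rightarrow> kvec set" where
  "sorth S = {a \<in> kspace. \<forall>b\<in>S. kform a b = 0}"

definition knorm :: "kvec \<Rightarrow> real" where
  "knorm a = sqrt ((l2norm (fst a))^2 + (l2norm (snd a))^2)"

definition kdiff :: "kvec \<Rightarrow> kvec \<Rightarrow> kvec" where
  "kdiff a b = ((\<lambda>n. fst a n - fst b n), (\<lambda>n. snd a n - snd b n))"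

definition kspan :: "kvec set \<Rightarrow> kvec set" where
  "kspan S = {v. \<exists>F c. finite F \<and> F \<subseteq> S \<and>
       v = ((\<lambda>n. \<Sum>a\<in>F. c a * fst a n), (\<lambda>n. \<Sum>a\<in>F. c a * snd a n))}"

definition AT :: "((nat \<Rightarrow> complex) \<Rightarrow> (nat \<Rightarrow> complex)) \<Rightarrow> kvec set" where
  "AT T = {(x, T x) | x. x \<in> KK T}"

definition Nplus :: "((nat \<Rightarrow> complex) \<Rightarrow> (nat \<Rightarrow> complex)) \<Rightarrow> complex \<Rightarrow> kvec set" where
  "Nplus T l = {(x, sc l x) | x. x \<in> l2} \<inter> sorth (AT T)"

definition Nminus :: "((nat \<Rightarrow> complex) \<Rightarrow> (nat \<Rightarrow> complex)) \<Rightarrow> complex \<Rightarrow> kvec set" where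
  "Nminus T l = {(sc l x, x) | x. x \<in> l2} \<inter> sorth (AT T)"

definition NN :: "((nat \<Rightarrow> complex) \<Rightarrow> (nat \<Rightarrow> complex)) \<Rightarrow> kvec set" where
  "NN T = kspan (\<Union>l\<in>{l. cmod l < 1}. Nplus T l \<union> Nminus T l)"

end

theory Submission
  imports Defs "HOL-Library.Function_Algebras" "HOL-Analysis.L2_Norm"
begin

text \<open>For density it suffices to
  approximate second components: once \<open>snd a\<close> is approximated by \<open>snd b\<^sub>0\<close> up to
  \<open>u\<close>, adding a suitable element \<open>(d, 0)\<close> of \<open>N\<^sub>0\<close> leaves the error \<open>(T\<^sup>* u, u)\<close>,
  of norm at most \<open>2 \<parallel>u\<parallel>\<close>.

  If the second components of \<open>\<N>\<close> were not dense, some \<open>h \<noteq> 0\<close> would be orthogonal to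
  all of them. For \<open>0 < t < 1\<close> the Neumann series solutions of
  \<open>x = (I - T\<^sup>* T) w + t T\<^sup>* x\<close> and \<open>z = (I - T T\<^sup>*) w + t T z\<close> give elements
  \<open>(x, t x)\<close> and \<open>(t z, z)\<close> of \<open>N\<^sub>t\<close>. Orthogonality for all \<open>t\<close> makes every power
  series coefficient vanish, i.e. \<open>\<langle>w, (I - T\<^sup>* T) T\<^sup>n h\<rangle> = 0\<close> and
  \<open>\<langle>w, (I - T T\<^sup>*) T\<^sup>*\<^sup>n h\<rangle> = 0\<close> for all \<open>w\<close> and \<open>n\<close>. So \<open>h\<close> lies in the unitary
  part of \<open>T\<close>, which is trivial because \<open>T\<close> is completely non-unitary.\<close>

section \<open>The sequence space \<open>l2\<close>\<close>

lemma sc_apply [simp]: "sc a x n = a * x n"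
  by (simp add: sc_def)

lemma l2_summable: "x \<in> l2 \<Longrightarrow> summable (\<lambda>n. (cmod (x n))\<^sup>2)"
  by (simp add: l2_def)

lemma l2_zero [simp]: "0 \<in> l2"
  by (simp add: l2_def)

lemma l2_sc [simp]: "x \<in> l2 \<Longrightarrow> sc a x \<in> l2"
  unfolding l2_def by (simp add: norm_mult power_mult_distrib summable_mult)

lemma l2_add [simp]:
  assumes "x \<in> l2" "y \<in> l2"
  shows "x + y \<in> l2"
  unfolding l2_def
proof (simp, rule summable_comparison_test')
  show "summable (\<lambda>n. 2 * (cmod (x n))\<^sup>2 + 2 * (cmod (y n))\<^sup>2)"
    using assms by (intro summable_add summable_mult) (auto simp: l2_def)
  have "(cmod (a + b))\<^sup>2 \<le> 2 * (cmod a)\<^sup>2 + 2 * (cmod b)\<^sup>2" for a b :: complex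
  proof -
    have "(cmod (a + b))\<^sup>2 \<le> (cmod a + cmod b)\<^sup>2"
      by (simp add: norm_triangle_ineq power_mono)
    also have "\<dots> \<le> 2 * (cmod a)\<^sup>2 + 2 * (cmod b)\<^sup>2"
      using power2_diff[of "cmod a" "cmod b"] power2_sum[of "cmod a" "cmod b"]
        zero_le_power2[of "cmod a - cmod b"] by linarith
    finally show ?thesis .
  qed
  then show "norm ((cmod (x n + y n))\<^sup>2) \<le> 2 * (cmod (x n))\<^sup>2 + 2 * (cmod (y n))\<^sup>2" for n
    by simp
qed

lemma uminus_eq_sc: "- x = sc (-1) x"
  by (auto simp: sc_def)

lemma l2_uminus [simp]: "x \<in> l2 \<Longrightarrow> - x \<in> l2"
  by (simp add: uminus_eq_sc)

lemma l2_diff [simp]: "x \<in> l2 \<Longrightarrow> y \<in> l2 \<Longrightarrow> x - y \<in> l2"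
  by (metis l2_add l2_uminus diff_conv_add_uminus)

lemma lincomb_eq_sc: "(\<lambda>n. a * x n + b * y n) = sc a x + sc b y"
  by (auto simp: sc_def)

lemma l2_lincomb [simp]: "x \<in> l2 \<Longrightarrow> y \<in> l2 \<Longrightarrow> (\<lambda>n. a * x n + b * y n) \<in> l2"
  by (simp add: lincomb_eq_sc)

lemma sum_fun_apply: "(\<Sum>i\<in>F. v i) n = (\<Sum>i\<in>F. v i n)"
  by (induction F rule: infinite_finite_induct) auto

lemma sum_mult_eq_sum_sc: "(\<lambda>n. \<Sum>i\<in>F. c i * v i n) = (\<Sum>i\<in>F. sc (c i) (v i))"
  by (rule ext) (simp add: sum_fun_apply)

lemma sc_sum: "sc a (\<Sum>i\<in>F. v i) = (\<Sum>i\<in>F. sc a (v i))"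
  by (rule ext) (simp add: sum_fun_apply sum_distrib_left)

lemma l2_sum: "(\<And>i. i \<in> F \<Longrightarrow> v i \<in> l2) \<Longrightarrow> (\<Sum>i\<in>F. v i) \<in> l2"
  by (induction F rule: infinite_finite_induct) auto

lemma summable_l2_norm_mult:
  assumes "x \<in> l2" "y \<in> l2"
  shows "summable (\<lambda>n. cmod (x n) * cmod (y n))"
proof (rule summable_comparison_test')
  show "summable (\<lambda>n. (cmod (x n))\<^sup>2 + (cmod (y n))\<^sup>2)"
    using assms by (intro summable_add) (auto simp: l2_def)
  show "norm (cmod (x n) * cmod (y n)) \<le> (cmod (x n))\<^sup>2 + (cmod (y n))\<^sup>2" for n
    using power2_diff[of "cmod (x n)" "cmod (y n)"] zero_le_power2[of "cmod (x n) - cmod (y n)"]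
      zero_le_power2[of "cmod (x n)"] zero_le_power2[of "cmod (y n)"]
    by (simp only: real_norm_def abs_mult abs_norm_cancel)
qed

lemma summable_l2inner: "x \<in> l2 \<Longrightarrow> y \<in> l2 \<Longrightarrow> summable (\<lambda>n. x n * cnj (y n))"
  by (rule summable_norm_cancel) (simp add: norm_mult summable_l2_norm_mult)

lemma l2inner_add_left:
  "x \<in> l2 \<Longrightarrow> y \<in> l2 \<Longrightarrow> z \<in> l2 \<Longrightarrow> l2inner (x + y) z = l2inner x z + l2inner y z"
  unfolding l2inner_def by (simp add: distrib_right suminf_add[symmetric] summable_l2inner)

lemma l2inner_sc_left: "x \<in> l2 \<Longrightarrow> z \<in> l2 \<Longrightarrow> l2inner (sc a x) z = a * l2inner x z"
  unfolding l2inner_def by (simp add: mult.assoc suminf_mult summable_l2inner)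

lemma l2inner_commute_cnj: "x \<in> l2 \<Longrightarrow> y \<in> l2 \<Longrightarrow> l2inner y x = cnj (l2inner x y)"
proof -
  assume "x \<in> l2" "y \<in> l2"
  then have "(\<lambda>n. x n * cnj (y n)) sums l2inner x y"
    unfolding l2inner_def by (simp add: summable_l2inner summable_sums)
  then have "(\<lambda>n. y n * cnj (x n)) sums cnj (l2inner x y)"
    using sums_cnj by (fastforce simp: mult.commute)
  then show ?thesis
    unfolding l2inner_def by (simp add: sums_iff)
qed

lemma l2inner_add_right:
  "x \<in> l2 \<Longrightarrow> y \<in> l2 \<Longrightarrow> z \<in> l2 \<Longrightarrow> l2inner z (x + y) = l2inner z x + l2inner z y"
  by (simp add: l2inner_commute_cnj[of _ z] l2inner_add_left)

lemma l2inner_sc_right: "x \<in> l2 \<Longrightarrow> z \<in> l2 \<Longrightarrow> l2inner z (sc a x) = cnj a * l2inner z x"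
  by (simp add: l2inner_commute_cnj[of _ z] l2inner_sc_left)

lemma l2inner_uminus_left: "x \<in> l2 \<Longrightarrow> z \<in> l2 \<Longrightarrow> l2inner (- x) z = - l2inner x z"
  by (simp add: uminus_eq_sc l2inner_sc_left)

lemma l2inner_diff_left:
  "x \<in> l2 \<Longrightarrow> y \<in> l2 \<Longrightarrow> z \<in> l2 \<Longrightarrow> l2inner (x - y) z = l2inner x z - l2inner y z"
  by (metis diff_conv_add_uminus l2inner_add_left l2inner_uminus_left l2_uminus)

lemma l2inner_diff_right:
  "x \<in> l2 \<Longrightarrow> y \<in> l2 \<Longrightarrow> z \<in> l2 \<Longrightarrow> l2inner z (x - y) = l2inner z x - l2inner z y"
  by (simp add: l2inner_commute_cnj[of _ z] l2inner_diff_left)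

lemma l2inner_uminus_right: "x \<in> l2 \<Longrightarrow> z \<in> l2 \<Longrightarrow> l2inner z (- x) = - l2inner z x"
  by (simp add: uminus_eq_sc l2inner_sc_right)

lemma l2inner_zero_left [simp]: "l2inner 0 z = 0"
  by (simp add: l2inner_def)

lemma l2inner_zero_right [simp]: "l2inner z 0 = 0"
  by (simp add: l2inner_def)

lemma l2inner_sum_left:
  "(\<And>i. i \<in> F \<Longrightarrow> v i \<in> l2) \<Longrightarrow> z \<in> l2 \<Longrightarrow>
    l2inner (\<Sum>i\<in>F. v i) z = (\<Sum>i\<in>F. l2inner (v i) z)"
  by (induction F rule: infinite_finite_induct) (auto simp: l2inner_add_left l2_sum)

lemma l2norm_nonneg [simp]: "x \<in> l2 \<Longrightarrow> 0 \<le> l2norm x"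
  by (simp add: l2norm_def l2_def suminf_nonneg)

lemma l2norm_power2: "x \<in> l2 \<Longrightarrow> (l2norm x)\<^sup>2 = (\<Sum>n. (cmod (x n))\<^sup>2)"
  unfolding l2norm_def l2_def by (simp add: suminf_nonneg)

lemma l2norm_zero [simp]: "l2norm 0 = 0"
  by (simp add: l2norm_def)

lemma l2inner_self: "x \<in> l2 \<Longrightarrow> l2inner x x = of_real ((l2norm x)\<^sup>2)"
  unfolding l2inner_def
  by (simp add: l2norm_power2 complex_norm_square[symmetric] suminf_of_real l2_summable)

lemma l2norm_eq_0: "x \<in> l2 \<Longrightarrow> l2norm x = 0 \<Longrightarrow> x = 0"
proof -
  assume x: "x \<in> l2" and "l2norm x = 0"
  then have "(\<Sum>n. (cmod (x n))\<^sup>2) = 0"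
    using l2norm_power2 by force
  then show "x = 0"
    using suminf_eq_zero_iff[OF l2_summable[OF x]] by (auto simp: fun_eq_iff)
qed

lemma l2_orthogonal_all_eq_0:
  assumes u: "u \<in> l2" and orth: "\<And>w. w \<in> l2 \<Longrightarrow> l2inner w u = 0"
  shows "u = 0"
proof (rule l2norm_eq_0[OF u])
  show "l2norm u = 0"
    using orth[OF u] l2inner_self[OF u] by simp
qed

lemma l2_inner_eqI:
  assumes "y \<in> l2" "z \<in> l2" "\<And>x. x \<in> l2 \<Longrightarrow> l2inner x y = l2inner x z"
  shows "y = z"
  using l2_orthogonal_all_eq_0[of "y - z"] assms by (simp add: l2inner_diff_right)

lemma l2_Cauchy_Schwarz:
  assumes x: "x \<in> l2" and y: "y \<in> l2"
  shows "cmod (l2inner x y) \<le> l2norm x * l2norm y"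
proof -
  have s: "summable (\<lambda>n. cmod (x n) * cmod (y n))"
    by (rule summable_l2_norm_mult[OF x y])
  have "cmod (l2inner x y) \<le> (\<Sum>n. cmod (x n * cnj (y n)))"
    unfolding l2inner_def by (rule summable_norm) (simp add: norm_mult s)
  also have "\<dots> = (\<Sum>n. cmod (x n) * cmod (y n))"
    by (simp add: norm_mult)
  also have "\<dots> \<le> l2norm x * l2norm y"
  proof (rule suminf_le_const[OF s])
    fix N
    have "(\<Sum>n<N. cmod (x n) * cmod (y n)) \<le>
        L2_set (\<lambda>n. cmod (x n)) {..<N} * L2_set (\<lambda>n. cmod (y n)) {..<N}"
      using L2_set_mult_ineq[of "\<lambda>n. cmod (x n)" "\<lambda>n. cmod (y n)" "{..<N}"] by simp
    also have "\<dots> \<le> l2norm x * l2norm y"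
      unfolding L2_set_def l2norm_def
      using x y
      by (intro mult_mono real_sqrt_le_mono sum_le_suminf) (auto simp: l2_def suminf_nonneg sum_nonneg)
    finally show "(\<Sum>n<N. cmod (x n) * cmod (y n)) \<le> l2norm x * l2norm y" .
  qed
  finally show ?thesis .
qed

lemma l2norm_add_power2:
  assumes x: "x \<in> l2" and y: "y \<in> l2"
  shows "(l2norm (x + y))\<^sup>2 = (l2norm x)\<^sup>2 + (l2norm y)\<^sup>2 + 2 * Re (l2inner x y)"
proof -
  have "complex_of_real ((l2norm (x + y))\<^sup>2) = l2inner (x + y) (x + y)"
    using x y by (simp add: l2inner_self)
  also have "\<dots> = l2inner x x + l2inner x y + l2inner y x + l2inner y y"
    using x y by (simp add: l2inner_add_left l2inner_add_right)
  also have "\<dots> = complex_of_real ((l2norm x)\<^sup>2 + (l2norm y)\<^sup>2 + 2 * Re (l2inner x y))"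
    using x y by (simp add: l2inner_self l2inner_commute_cnj[of x y] complex_eq_iff)
  finally show ?thesis
    using of_real_eq_iff by blast
qed

lemma l2norm_triangle:
  assumes x: "x \<in> l2" and y: "y \<in> l2"
  shows "l2norm (x + y) \<le> l2norm x + l2norm y"
proof (rule power2_le_imp_le)
  have "Re (l2inner x y) \<le> l2norm x * l2norm y"
    using l2_Cauchy_Schwarz[OF x y] complex_Re_le_cmod order_trans by blast
  then show "(l2norm (x + y))\<^sup>2 \<le> (l2norm x + l2norm y)\<^sup>2"
    by (simp add: l2norm_add_power2[OF x y] power2_sum)
qed (simp add: x y)

lemma l2norm_sc:
  assumes x: "x \<in> l2"
  shows "l2norm (sc a x) = cmod a * l2norm x"
proof -
  have "(l2norm (sc a x))\<^sup>2 = (cmod a * l2norm x)\<^sup>2"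
    using x by (simp add: l2norm_power2 norm_mult power_mult_distrib suminf_mult l2_summable)
  then show ?thesis
    using x by simp
qed

lemma l2norm_uminus: "x \<in> l2 \<Longrightarrow> l2norm (- x) = l2norm x"
  by (simp add: uminus_eq_sc l2norm_sc)

lemma l2norm_minus_commute: "x \<in> l2 \<Longrightarrow> y \<in> l2 \<Longrightarrow> l2norm (x - y) = l2norm (y - x)"
  by (metis l2_diff l2norm_uminus minus_diff_eq)

lemma l2norm_triangle_diff:
  "x \<in> l2 \<Longrightarrow> y \<in> l2 \<Longrightarrow> z \<in> l2 \<Longrightarrow> l2norm (x - z) \<le> l2norm (x - y) + l2norm (y - z)"
  using l2norm_triangle[of "x - y" "y - z"] by simp

lemma l2_coord_le_norm:
  assumes x: "x \<in> l2"
  shows "cmod (x k) \<le> l2norm x"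
proof (rule power2_le_imp_le)
  show "(cmod (x k))\<^sup>2 \<le> (l2norm x)\<^sup>2"
    using sum_le_suminf[OF l2_summable[OF x], of "{k}"] x by (simp add: l2norm_power2)
qed (simp add: x)

lemma l2norm_parallelogram:
  "x \<in> l2 \<Longrightarrow> y \<in> l2 \<Longrightarrow>
    (l2norm (x + y))\<^sup>2 + (l2norm (x - y))\<^sup>2 = 2 * (l2norm x)\<^sup>2 + 2 * (l2norm y)\<^sup>2"
  using l2norm_add_power2[of x y] l2norm_add_power2[of x "- y"]
  by (simp add: l2norm_uminus l2inner_uminus_right)

section \<open>Convergence and completeness\<close>

definition l2lim :: "(nat \<Rightarrow> nat \<Rightarrow> complex) \<Rightarrow> (nat \<Rightarrow> complex) \<Rightarrow> bool" where
  "l2lim u x \<longleftrightarrow> (\<lambda>k. l2norm (u k - x)) \<longlonglongrightarrow> 0"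

lemma l2lim_const: "l2lim (\<lambda>k. x) x"
  by (simp add: l2lim_def)

lemma l2lim_Suc: "l2lim u x \<Longrightarrow> l2lim (\<lambda>k. u (Suc k)) x"
  unfolding l2lim_def using LIMSEQ_Suc by fastforce

lemma l2lim_unique:
  assumes u: "\<And>k. u k \<in> l2" and x: "x \<in> l2" and y: "y \<in> l2"
    and lim: "l2lim u x" "l2lim u y"
  shows "x = y"
proof -
  have "(\<lambda>k. l2norm (u k - x) + l2norm (u k - y)) \<longlonglongrightarrow> 0"
    using tendsto_add[OF lim[unfolded l2lim_def]] by simp
  moreover have "l2norm (x - y) \<le> l2norm (u k - x) + l2norm (u k - y)" for k
    using l2norm_triangle_diff[OF x u[of k] y] l2norm_minus_commute[OF x u[of k]] by simp
  ultimately have "l2norm (x - y) \<le> 0"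
    by (intro LIMSEQ_le_const[of _ 0]) auto
  then have "l2norm (x - y) = 0"
    using x y by (meson antisym l2_diff l2norm_nonneg)
  then show "x = y"
    using l2norm_eq_0[of "x - y"] x y by simp
qed

lemma l2lim_inner:
  assumes u: "\<And>k. u k \<in> l2" and x: "x \<in> l2" and h: "h \<in> l2" and lim: "l2lim u x"
  shows "(\<lambda>k. l2inner (u k) h) \<longlonglongrightarrow> l2inner x h"
proof -
  have "(\<lambda>k. l2inner (u k) h - l2inner x h) \<longlonglongrightarrow> 0"
  proof (rule tendsto_0_le[where K = "l2norm h"])
    show "(\<lambda>k. l2norm (u k - x)) \<longlonglongrightarrow> 0"
      using lim unfolding l2lim_def .
    show "\<forall>\<^sub>F k in sequentially.
        norm (l2inner (u k) h - l2inner x h) \<le> norm (l2norm (u k - x)) * l2norm h"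
      using l2_Cauchy_Schwarz[of "u k - x" h for k] u x h by (simp add: l2inner_diff_left)
  qed
  then show ?thesis
    by (simp add: LIM_zero_cancel)
qed

lemma l2lim_norm_diff:
  assumes u: "\<And>k. u k \<in> l2" and x: "x \<in> l2" and a: "a \<in> l2" and lim: "l2lim u x"
  shows "(\<lambda>k. l2norm (a - u k)) \<longlonglongrightarrow> l2norm (a - x)"
proof -
  have "(\<lambda>k. l2norm (a - u k) - l2norm (a - x)) \<longlonglongrightarrow> 0"
  proof (rule tendsto_0_le[where K = 1])
    show "(\<lambda>k. l2norm (u k - x)) \<longlonglongrightarrow> 0"
      using lim unfolding l2lim_def .
    have "\<bar>l2norm (a - u k) - l2norm (a - x)\<bar> \<le> l2norm (u k - x)" for k
      using l2norm_triangle_diff[OF a x u[of k]] l2norm_triangle_diff[OF a u[of k] x]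
        l2norm_minus_commute[OF x u[of k]] by (simp add: abs_le_iff)
    then show "\<forall>\<^sub>F k in sequentially.
        norm (l2norm (a - u k) - l2norm (a - x)) \<le> norm (l2norm (u k - x)) * 1"
      using u x by simp
  qed
  then show ?thesis
    by (simp add: LIM_zero_cancel)
qed

lemma l2lim_add:
  assumes u: "\<And>k. u k \<in> l2" and v: "\<And>k. v k \<in> l2" and x: "x \<in> l2" and y: "y \<in> l2"
    and "l2lim u x" "l2lim v y"
  shows "l2lim (\<lambda>k. u k + v k) (x + y)"
  unfolding l2lim_def
proof (rule tendsto_0_le[where K = 1])
  show "(\<lambda>k. l2norm (u k - x) + l2norm (v k - y)) \<longlonglongrightarrow> 0"
    using tendsto_add[of _ 0 _ _ 0] assms(5,6) by (simp add: l2lim_def)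
  have "l2norm (u k + v k - (x + y)) \<le> l2norm (u k - x) + l2norm (v k - y)" for k
  proof -
    have "u k + v k - (x + y) = (u k - x) + (v k - y)"
      by simp
    then show ?thesis
      using l2norm_triangle[OF l2_diff[OF u x] l2_diff[OF v y], of k k] by (simp only:)
  qed
  then show "\<forall>\<^sub>F k in sequentially.
      norm (l2norm (u k + v k - (x + y))) \<le> norm (l2norm (u k - x) + l2norm (v k - y)) * 1"
    using u v x y by simp
qed

lemma l2lim_sc:
  assumes u: "\<And>k. u k \<in> l2" and x: "x \<in> l2" and lim: "l2lim u x"
  shows "l2lim (\<lambda>k. sc a (u k)) (sc a x)"
proof -
  have "sc a (u k) - sc a x = sc a (u k - x)" for k
    by (auto simp: sc_def algebra_simps)
  then show ?thesis
    using lim u x tendsto_mult_right_zero unfolding l2lim_def by (simp add: l2norm_sc)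
qed

text \<open>Completeness of \<open>l2\<close>: the limit is taken coordinatewise, and Fatou's lemma for
  partial sums bounds its distance to the sequence.\<close>

lemma l2_coordinatewise_limit_near:
  assumes u: "\<And>k. u k \<in> l2" and x: "\<And>j. (\<lambda>k. u k j) \<longlonglongrightarrow> x j"
    and near: "\<And>m. m \<ge> N \<Longrightarrow> l2norm (u n - u m) \<le> e"
  shows "u n - x \<in> l2" "l2norm (u n - x) \<le> e"
proof -
  have partial: "(\<Sum>j<M. (cmod ((u n - x) j))\<^sup>2) \<le> e\<^sup>2" for M
    unfolding fun_diff_def
  proof (rule LIMSEQ_le_const2)
    show "(\<lambda>m. \<Sum>j<M. (cmod (u n j - u m j))\<^sup>2) \<longlonglongrightarrow> (\<Sum>j<M. (cmod (u n j - x j))\<^sup>2)"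
      by (intro tendsto_intros x)
    have "(\<Sum>j<M. (cmod ((u n - u m) j))\<^sup>2) \<le> e\<^sup>2" if "m \<ge> N" for m
    proof -
      have "(\<Sum>j<M. (cmod ((u n - u m) j))\<^sup>2) \<le> (l2norm (u n - u m))\<^sup>2"
        using sum_le_suminf[OF l2_summable[OF l2_diff[OF u u]]] u by (simp add: l2norm_power2)
      also have "\<dots> \<le> e\<^sup>2"
        using near[OF that] u by (simp add: power_mono)
      finally show ?thesis .
    qed
    then show "\<exists>N. \<forall>m\<ge>N. (\<Sum>j<M. (cmod (u n j - u m j))\<^sup>2) \<le> e\<^sup>2"
      by auto
  qed
  have summable: "summable (\<lambda>j. (cmod ((u n - x) j))\<^sup>2)"
    using partial by (intro summableI_nonneg_bounded[where x = "e\<^sup>2"]) auto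
  then show l2: "u n - x \<in> l2"
    by (simp add: l2_def)
  have "(l2norm (u n - x))\<^sup>2 \<le> e\<^sup>2"
    using l2 suminf_le_const[OF summable partial] by (simp add: l2norm_power2)
  moreover have "0 \<le> e"
    using near[of N] l2norm_nonneg[OF l2_diff[OF u u], of n N] by linarith
  ultimately show "l2norm (u n - x) \<le> e"
    by (auto intro: power2_le_imp_le)
qed

lemma l2_Cauchy_l2lim:
  assumes u: "\<And>k. u k \<in> l2"
    and Cauchy: "\<And>e. e > 0 \<Longrightarrow> \<exists>N. \<forall>m\<ge>N. \<forall>n\<ge>N. l2norm (u m - u n) < e"
  shows "\<exists>x\<in>l2. l2lim u x"
proof -
  have "Cauchy (\<lambda>k. u k j)" for j
  proof (rule CauchyI)
    fix e :: real assume "e > 0"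
    then obtain N where N: "\<forall>m\<ge>N. \<forall>n\<ge>N. l2norm (u m - u n) < e"
      using Cauchy by blast
    have "norm (u m j - u n j) < e" if "m \<ge> N" "n \<ge> N" for m n
    proof -
      have "norm (u m j - u n j) \<le> l2norm (u m - u n)"
        using l2_coord_le_norm[OF l2_diff[OF u u], of m n j] by simp
      also have "\<dots> < e"
        using N that by blast
      finally show ?thesis .
    qed
    then show "\<exists>M. \<forall>m\<ge>M. \<forall>n\<ge>M. norm (u m j - u n j) < e"
      by blast
  qed
  define x where "x = (\<lambda>j. lim (\<lambda>k. u k j))"
  have x: "(\<lambda>k. u k j) \<longlonglongrightarrow> x j" for j
    using \<open>Cauchy (\<lambda>k. u k j)\<close> by (simp add: x_def Cauchy_convergent_iff convergent_LIMSEQ_iff)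
  have near: "u n - x \<in> l2 \<and> l2norm (u n - x) \<le> e" if "n \<ge> N"
    and N: "\<forall>m\<ge>N. \<forall>n\<ge>N. l2norm (u m - u n) < e" for e n N
  proof -
    have "l2norm (u n - u m) \<le> e" if "m \<ge> N" for m
      using N \<open>n \<ge> N\<close> that by (simp add: less_imp_le)
    then show ?thesis
      using l2_coordinatewise_limit_near[OF u x] by blast
  qed
  obtain N where "u N - x \<in> l2"
    using Cauchy[of 1] near[of _ _ 1] by auto
  then have x_l2: "x \<in> l2"
    using l2_diff[OF u[of N] \<open>u N - x \<in> l2\<close>] by simp
  have "l2lim u x"
    unfolding l2lim_def
  proof (rule LIMSEQ_I)
    fix r :: real assume "r > 0"
    then obtain N where "\<forall>m\<ge>N. \<forall>n\<ge>N. l2norm (u m - u n) < r / 2"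
      using Cauchy[of "r / 2"] by auto
    then have "norm (l2norm (u n - x) - 0) < r" if "n \<ge> N" for n
      using near[of N n "r / 2"] that \<open>r > 0\<close> l2norm_nonneg[of "u n - x"] by auto
    then show "\<exists>N. \<forall>n\<ge>N. norm (l2norm (u n - x) - 0) < r"
      by blast
  qed
  with x_l2 show ?thesis
    by blast
qed

lemma l2norm_sum_le: "(\<And>i. i \<in> F \<Longrightarrow> v i \<in> l2) \<Longrightarrow> l2norm (\<Sum>i\<in>F. v i) \<le> (\<Sum>i\<in>F. l2norm (v i))"
proof (induction F rule: infinite_finite_induct)
  case (insert i F)
  have "l2norm (\<Sum>i\<in>insert i F. v i) = l2norm (v i + (\<Sum>i\<in>F. v i))"
    by (rule arg_cong[where f = l2norm], rule sum.insert[OF insert(1,2)])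
  also have "\<dots> \<le> l2norm (v i) + l2norm (\<Sum>i\<in>F. v i)"
    using insert by (intro l2norm_triangle l2_sum) auto
  also have "\<dots> \<le> (\<Sum>i\<in>insert i F. l2norm (v i))"
    using insert by simp
  finally show ?case .
qed auto

lemma l2_summable_norm_l2lim:
  assumes v: "\<And>n. v n \<in> l2" and summable: "summable (\<lambda>n. l2norm (v n))"
  shows "\<exists>x\<in>l2. l2lim (\<lambda>N. \<Sum>n<N. v n) x"
proof (rule l2_Cauchy_l2lim)
  show "(\<Sum>n<k. v n) \<in> l2" for k
    using v by (simp add: l2_sum)
  fix e :: real assume "e > 0"
  then obtain N where N: "\<forall>m\<ge>N. \<forall>n. norm (\<Sum>i=m..<n. l2norm (v i)) < e"
    using summable unfolding summable_Cauchy by blast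
  have tail: "l2norm ((\<Sum>i<n. v i) - (\<Sum>i<m. v i)) < e" if "N \<le> m" "m \<le> n" for m n
  proof -
    have "l2norm ((\<Sum>i<n. v i) - (\<Sum>i<m. v i)) = l2norm (\<Sum>i=m..<n. v i)"
      using sum_diff_nat_ivl[of 0 m n v] \<open>m \<le> n\<close> by (simp add: atLeast0LessThan)
    also have "\<dots> \<le> (\<Sum>i=m..<n. l2norm (v i))"
      using v by (rule l2norm_sum_le)
    also have "\<dots> < e"
      using N that by (metis abs_of_nonneg l2norm_nonneg real_norm_def sum_nonneg v)
    finally show ?thesis .
  qed
  have "l2norm ((\<Sum>i<m. v i) - (\<Sum>i<n. v i)) < e" if "m \<ge> N" "n \<ge> N" for m n
  proof (cases "m \<le> n")
    case True
    then show ?thesis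
      using tail[of m n] that l2norm_minus_commute[of "\<Sum>i<m. v i" "\<Sum>i<n. v i"] v
      by (simp add: l2_sum)
  next
    case False
    then show ?thesis
      using tail[of n m] that by simp
  qed
  then show "\<exists>N. \<forall>m\<ge>N. \<forall>n\<ge>N. l2norm ((\<Sum>i<m. v i) - (\<Sum>i<n. v i)) < e"
    by blast
qed

section \<open>Contractions and their adjoints\<close>

lemma contraction_l2: "is_contraction C \<Longrightarrow> x \<in> l2 \<Longrightarrow> C x \<in> l2"
  by (simp add: is_contraction_def)

lemma contraction_norm_le: "is_contraction C \<Longrightarrow> x \<in> l2 \<Longrightarrow> l2norm (C x) \<le> l2norm x"
  by (simp add: is_contraction_def)

lemma contraction_lincomb:
  "is_contraction C \<Longrightarrow> x \<in> l2 \<Longrightarrow> y \<in> l2 \<Longrightarrow>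
    C (\<lambda>n. a * x n + b * y n) = (\<lambda>n. a * C x n + b * C y n)"
  by (simp add: is_contraction_def)

lemma contraction_add: "is_contraction C \<Longrightarrow> x \<in> l2 \<Longrightarrow> y \<in> l2 \<Longrightarrow> C (x + y) = C x + C y"
  using contraction_lincomb[of C x y 1 1] by (simp add: plus_fun_def)

lemma contraction_sc: "is_contraction C \<Longrightarrow> x \<in> l2 \<Longrightarrow> C (sc a x) = sc a (C x)"
  using contraction_lincomb[of C x x a 0] by (simp add: sc_def)

lemma contraction_zero: "is_contraction C \<Longrightarrow> C 0 = 0"
  using contraction_sc[of C 0 0] l2_zero by (simp add: sc_def zero_fun_def)

lemma contraction_diff: "is_contraction C \<Longrightarrow> x \<in> l2 \<Longrightarrow> y \<in> l2 \<Longrightarrow> C (x - y) = C x - C y"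
  using contraction_lincomb[of C x y 1 "-1"] by (simp add: fun_diff_def)

lemma contraction_sum:
  "is_contraction C \<Longrightarrow> (\<And>i. i \<in> F \<Longrightarrow> v i \<in> l2) \<Longrightarrow> C (\<Sum>i\<in>F. v i) = (\<Sum>i\<in>F. C (v i))"
  by (induction F rule: infinite_finite_induct) (auto simp: contraction_zero contraction_add l2_sum)

lemma contraction_l2lim:
  assumes C: "is_contraction C" and u: "\<And>k. u k \<in> l2" and x: "x \<in> l2" and lim: "l2lim u x"
  shows "l2lim (\<lambda>k. C (u k)) (C x)"
  unfolding l2lim_def
proof (rule tendsto_0_le[where K = 1])
  show "(\<lambda>k. l2norm (u k - x)) \<longlonglongrightarrow> 0"
    using lim by (simp add: l2lim_def)
  show "\<forall>\<^sub>F k in sequentially. norm (l2norm (C (u k) - C x)) \<le> norm (l2norm (u k - x)) * 1"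
    using contraction_diff[OF C u x] contraction_norm_le[OF C l2_diff[OF u x]]
      contraction_l2[OF C] u x by (simp add: l2norm_nonneg[OF l2_diff])
qed

lemma is_contraction_id: "is_contraction id"
  by (simp add: is_contraction_def)

lemma is_contraction_comp: "is_contraction B \<Longrightarrow> is_contraction C \<Longrightarrow> is_contraction (B \<circ> C)"
  unfolding is_contraction_def comp_def by (auto intro: order_trans) (meson order_trans)

lemma is_contraction_funpow: "is_contraction C \<Longrightarrow> is_contraction (C ^^ n)"
  by (induction n) (auto simp: is_contraction_id is_contraction_comp)

definition unit_vec :: "nat \<Rightarrow> nat \<Rightarrow> complex" where
  "unit_vec j = (\<lambda>k. if k = j then 1 else 0)"

definition trunc_seq :: "nat \<Rightarrow> (nat \<Rightarrow> complex) \<Rightarrow> nat \<Rightarrow> complex" where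
  "trunc_seq N x = (\<lambda>k. if k < N then x k else 0)"

lemma l2_unit_vec [simp]: "unit_vec j \<in> l2"
  unfolding l2_def unit_vec_def mem_Collect_eq by (rule summable_finite[of "{j}"]) auto

lemma l2_trunc_seq [simp]: "trunc_seq N x \<in> l2"
  unfolding l2_def trunc_seq_def mem_Collect_eq by (rule summable_finite[of "{..<N}"]) auto

lemma trunc_seq_eq_sum: "trunc_seq N x = (\<Sum>j<N. sc (x j) (unit_vec j))"
proof
  fix k
  have "(\<Sum>j<N. sc (x j) (unit_vec j)) k = (\<Sum>j<N. if k = j then x j else 0)"
    by (simp add: sum_fun_apply unit_vec_def if_distrib cong: if_cong)
  then show "trunc_seq N x k = (\<Sum>j<N. sc (x j) (unit_vec j)) k"
    by (simp add: trunc_seq_def)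
qed

lemma l2norm_trunc_seq: "l2norm (trunc_seq N x) = sqrt (\<Sum>j<N. (cmod (x j))\<^sup>2)"
  unfolding l2norm_def trunc_seq_def by (subst suminf_finite[of "{..<N}"]) auto

lemma l2lim_trunc_seq:
  assumes x: "x \<in> l2"
  shows "l2lim (\<lambda>N. trunc_seq N x) x"
proof -
  define f where "f k = (cmod (x k))\<^sup>2" for k
  have f: "summable f"
    using x unfolding f_def by (simp add: l2_def)
  have "(l2norm (trunc_seq N x - x))\<^sup>2 = suminf f - (\<Sum>k<N. f k)" for N
  proof -
    have "(l2norm (trunc_seq N x - x))\<^sup>2 = (\<Sum>k. (cmod ((trunc_seq N x - x) k))\<^sup>2)"
      using x by (simp add: l2norm_power2)
    also have "\<dots> = (\<Sum>k. f k - (if k < N then f k else 0))"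
      by (intro arg_cong[where f = suminf] ext) (simp add: trunc_seq_def f_def)
    also have "\<dots> = suminf f - (\<Sum>k<N. f k)"
      using suminf_diff[OF f summable_finite[of "{..<N}" "\<lambda>k. if k < N then f k else 0"]]
        suminf_finite[of "{..<N}" "\<lambda>k. if k < N then f k else 0"] by auto
    finally show ?thesis .
  qed
  moreover have "(\<lambda>N. suminf f - (\<Sum>k<N. f k)) \<longlonglongrightarrow> 0"
    using tendsto_diff[OF tendsto_const[of "suminf f"] summable_LIMSEQ[OF f]] by simp
  ultimately have "(\<lambda>N. sqrt ((l2norm (trunc_seq N x - x))\<^sup>2)) \<longlonglongrightarrow> 0"
    using tendsto_real_sqrt by fastforce
  then show ?thesis
    unfolding l2lim_def using x by simp
qed

definition adjoint_coeffs ::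
    "((nat \<Rightarrow> complex) \<Rightarrow> nat \<Rightarrow> complex) \<Rightarrow> (nat \<Rightarrow> complex) \<Rightarrow> nat \<Rightarrow> complex" where
  "adjoint_coeffs T y j = cnj (l2inner (T (unit_vec j)) y)"

lemma contraction_trunc_seq_inner:
  assumes T: "is_contraction T" and y: "y \<in> l2"
  shows "l2inner (T (trunc_seq N x)) y = (\<Sum>j<N. x j * cnj (adjoint_coeffs T y j))"
proof -
  have "T (trunc_seq N x) = (\<Sum>j<N. sc (x j) (T (unit_vec j)))"
    unfolding trunc_seq_eq_sum by (simp add: contraction_sum[OF T] contraction_sc[OF T])
  then show ?thesis
    using T y by (simp add: l2inner_sum_left l2inner_sc_left contraction_l2 adjoint_coeffs_def)
qed

text \<open>Testing the coefficient sequence against its own truncations shows that it lies in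
  \<open>l2\<close>.\<close>

lemma adjoint_coeffs_l2:
  assumes T: "is_contraction T" and y: "y \<in> l2"
  shows "adjoint_coeffs T y \<in> l2"
proof -
  let ?z = "adjoint_coeffs T y"
  have "(\<Sum>j<N. (cmod (?z j))\<^sup>2) \<le> (l2norm y)\<^sup>2" for N
  proof -
    define S where "S = (\<Sum>j<N. (cmod (?z j))\<^sup>2)"
    have S: "0 \<le> S"
      by (simp add: S_def sum_nonneg)
    have "complex_of_real S = l2inner (T (trunc_seq N ?z)) y"
      by (simp only: contraction_trunc_seq_inner[OF T y] S_def of_real_sum complex_norm_square)
    then have "S = cmod (l2inner (T (trunc_seq N ?z)) y)"
      using S by (metis abs_of_nonneg norm_of_real)
    also have "\<dots> \<le> l2norm (T (trunc_seq N ?z)) * l2norm y"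
      using T y by (simp add: l2_Cauchy_Schwarz contraction_l2)
    also have "\<dots> \<le> sqrt S * l2norm y"
      using contraction_norm_le[OF T l2_trunc_seq] y
      by (simp add: mult_right_mono l2norm_trunc_seq S_def)
    finally have le: "S \<le> sqrt S * l2norm y" .
    have "sqrt S \<le> l2norm y"
    proof (cases "S = 0")
      case False
      then have "0 < sqrt S"
        using S by simp
      moreover have "sqrt S * sqrt S \<le> sqrt S * l2norm y"
        using le S by simp
      ultimately show ?thesis
        by (metis mult_left_le_imp_le)
    qed (use y in simp)
    then show ?thesis
      using S by (metis S_def power_mono real_sqrt_ge_zero real_sqrt_pow2)
  qed
  then show ?thesis
    unfolding l2_def mem_Collect_eq
    by (intro summableI_nonneg_bounded[where x = "(l2norm y)\<^sup>2"]) auto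
qed

lemma adjoint_coeffs_inner:
  assumes T: "is_contraction T" and x: "x \<in> l2" and y: "y \<in> l2"
  shows "l2inner (T x) y = l2inner x (adjoint_coeffs T y)"
proof (rule LIMSEQ_unique)
  show "(\<lambda>N. l2inner (T (trunc_seq N x)) y) \<longlonglongrightarrow> l2inner (T x) y"
    using l2lim_inner[OF _ _ y contraction_l2lim[OF T _ x l2lim_trunc_seq[OF x]]] T x
    by (simp add: contraction_l2)
  show "(\<lambda>N. l2inner (T (trunc_seq N x)) y) \<longlonglongrightarrow> l2inner x (adjoint_coeffs T y)"
    unfolding contraction_trunc_seq_inner[OF T y] unfolding l2inner_def
    by (rule summable_LIMSEQ[OF summable_l2inner[OF x adjoint_coeffs_l2[OF T y]]])
qed

lemma adjoint_char:
  assumes T: "is_contraction T" and y: "y \<in> l2"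
  shows "adjoint T y \<in> l2 \<and> (\<forall>x\<in>l2. l2inner (T x) y = l2inner x (adjoint T y))"
proof -
  have "\<exists>!z. z \<in> l2 \<and> (\<forall>x\<in>l2. l2inner (T x) y = l2inner x z)"
  proof (rule ex_ex1I)
    show "\<exists>z. z \<in> l2 \<and> (\<forall>x\<in>l2. l2inner (T x) y = l2inner x z)"
      using adjoint_coeffs_l2[OF T y] adjoint_coeffs_inner[OF T _ y] by blast
  next
    fix z1 z2
    assume "z1 \<in> l2 \<and> (\<forall>x\<in>l2. l2inner (T x) y = l2inner x z1)"
      and "z2 \<in> l2 \<and> (\<forall>x\<in>l2. l2inner (T x) y = l2inner x z2)"
    then show "z1 = z2"
      by (intro l2_inner_eqI) auto
  qed
  then show ?thesis
    unfolding adjoint_def by (rule theI')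
qed

lemma adjoint_l2: "is_contraction T \<Longrightarrow> y \<in> l2 \<Longrightarrow> adjoint T y \<in> l2"
  using adjoint_char by blast

lemma l2inner_adjoint:
  "is_contraction T \<Longrightarrow> x \<in> l2 \<Longrightarrow> y \<in> l2 \<Longrightarrow> l2inner (T x) y = l2inner x (adjoint T y)"
  using adjoint_char by blast

lemma adjoint_eqI:
  assumes "is_contraction T" "y \<in> l2" "z \<in> l2" "\<And>x. x \<in> l2 \<Longrightarrow> l2inner (T x) y = l2inner x z"
  shows "adjoint T y = z"
  using l2_inner_eqI[of "adjoint T y" z] adjoint_char[of T y] assms by auto

lemma is_contraction_adjoint:
  assumes T: "is_contraction T"
  shows "is_contraction (adjoint T)"
proof -
  let ?A = "adjoint T"
  have "?A (\<lambda>n. a * x n + b * y n) = (\<lambda>n. a * ?A x n + b * ?A y n)"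
    if x: "x \<in> l2" and y: "y \<in> l2" for x y a b
  proof (rule adjoint_eqI[OF T])
    fix v assume v: "v \<in> l2"
    show "l2inner (T v) (\<lambda>n. a * x n + b * y n) = l2inner v (\<lambda>n. a * ?A x n + b * ?A y n)"
      using x y v adjoint_l2[OF T x] adjoint_l2[OF T y] contraction_l2[OF T v]
      by (simp add: lincomb_eq_sc l2inner_add_right l2inner_sc_right l2inner_adjoint[OF T])
  qed (use x y adjoint_l2[OF T] in simp_all)
  moreover have "l2norm (?A y) \<le> l2norm y" if y: "y \<in> l2" for y
  proof -
    have Ay: "?A y \<in> l2"
      by (rule adjoint_l2[OF T y])
    have "(l2norm (?A y))\<^sup>2 = Re (l2inner (T (?A y)) y)"
      using l2inner_adjoint[OF T Ay y] l2inner_self[OF Ay] by simp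
    also have "\<dots> \<le> l2norm (T (?A y)) * l2norm y"
      using l2_Cauchy_Schwarz[OF contraction_l2[OF T Ay] y] complex_Re_le_cmod order_trans by blast
    also have "\<dots> \<le> l2norm (?A y) * l2norm y"
      using contraction_norm_le[OF T Ay] y by (simp add: mult_right_mono)
    finally have le: "l2norm (?A y) * l2norm (?A y) \<le> l2norm (?A y) * l2norm y"
      by (simp add: power2_eq_square)
    show ?thesis
    proof (cases "l2norm (?A y) = 0")
      case False
      then have "0 < l2norm (?A y)"
        using l2norm_nonneg[OF Ay] by linarith
      with le show ?thesis
        by (metis mult_left_le_imp_le)
    qed (use y in simp)
  qed
  ultimately show ?thesis
    unfolding is_contraction_def using adjoint_l2[OF T] by blast
qed

definition adjoint_pair ::
    "((nat \<Rightarrow> complex) \<Rightarrow> nat \<Rightarrow> complex) \<Rightarrow> ((nat \<Rightarrow> complex) \<Rightarrow> nat \<Rightarrow> complex) \<Rightarrow> bool" where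
  "adjoint_pair B C \<longleftrightarrow> is_contraction B \<and> is_contraction C \<and>
     (\<forall>x\<in>l2. \<forall>y\<in>l2. l2inner (B x) y = l2inner x (C y))"

lemma adjoint_pair_inner:
  "adjoint_pair B C \<Longrightarrow> x \<in> l2 \<Longrightarrow> y \<in> l2 \<Longrightarrow> l2inner (B x) y = l2inner x (C y)"
  by (simp add: adjoint_pair_def)

lemma adjoint_pair_adjoint: "is_contraction T \<Longrightarrow> adjoint_pair T (adjoint T)"
  by (simp add: adjoint_pair_def is_contraction_adjoint l2inner_adjoint)

lemma adjoint_pair_sym: "adjoint_pair B C \<Longrightarrow> adjoint_pair C B"
  unfolding adjoint_pair_def by (metis contraction_l2 l2inner_commute_cnj)

lemma adjoint_pair_funpow:
  assumes BC: "adjoint_pair B C"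
  shows "adjoint_pair (B ^^ n) (C ^^ n)"
proof (induction n)
  case (Suc n)
  have "l2inner ((B ^^ Suc n) x) y = l2inner x ((C ^^ Suc n) y)" if "x \<in> l2" "y \<in> l2" for x y
    using that Suc BC
    by (simp add: adjoint_pair_def contraction_l2 is_contraction_funpow funpow_swap1)
  moreover have "is_contraction (B ^^ Suc n)" "is_contraction (C ^^ Suc n)"
    using BC by (simp_all only: adjoint_pair_def is_contraction_funpow)
  ultimately show ?case
    unfolding adjoint_pair_def by blast
qed (simp add: adjoint_pair_def is_contraction_id[unfolded id_def])

lemma adjoint_pair_defect_selfadjoint:
  assumes BC: "adjoint_pair B C" and w: "w \<in> l2" and u: "u \<in> l2"
  shows "l2inner (w - C (B w)) u = l2inner w (u - C (B u))"
proof -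
  have contr: "is_contraction B" "is_contraction C"
    using BC by (auto simp: adjoint_pair_def)
  have "l2inner (C (B w)) u = l2inner w (C (B u))"
    using adjoint_pair_inner[OF adjoint_pair_sym[OF BC]] adjoint_pair_inner[OF BC]
      contraction_l2[OF contr(1)] w u by metis
  then show ?thesis
    using w u contr by (simp add: l2inner_diff_left l2inner_diff_right contraction_l2)
qed

section \<open>Best approximation and closed subspaces\<close>

lemma l2_orthogonal_of_minimal:
  assumes h: "h \<in> l2" and s: "s \<in> l2" and min: "\<And>c. l2norm h \<le> l2norm (h + sc c s)"
  shows "l2inner s h = 0"
proof -
  define \<beta> where "\<beta> = l2inner h s"
  have expand: "(l2norm (h + sc c s))\<^sup>2 =
      (l2norm h)\<^sup>2 + (cmod c)\<^sup>2 * (l2norm s)\<^sup>2 + 2 * Re (cnj c * \<beta>)" for c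
    using l2norm_add_power2[OF h l2_sc[OF s, of c]]
    by (simp add: l2norm_sc[OF s] l2inner_sc_right[OF s h] \<beta>_def power_mult_distrib)
  have "\<beta> = 0"
  proof (rule ccontr)
    assume "\<beta> \<noteq> 0"
    txt \<open>Moving from \<open>h\<close> a small step \<open>t\<close> in the direction \<open>-\<beta> s\<close> decreases the norm.\<close>
    define t where "t = 1 / ((l2norm s)\<^sup>2 + 1)"
    have t: "t > 0" "t * (l2norm s)\<^sup>2 < 1"
      unfolding t_def by (simp_all add: add_pos_nonneg field_simps)
    define c where "c = - complex_of_real t * \<beta>"
    have "cnj c * \<beta> = - (complex_of_real t * (\<beta> * cnj \<beta>))"
      by (simp add: c_def algebra_simps)
    then have "Re (cnj c * \<beta>) = - t * (cmod \<beta>)\<^sup>2"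
      by (simp only: complex_norm_square[symmetric]) simp
    moreover have "(cmod c)\<^sup>2 = t\<^sup>2 * (cmod \<beta>)\<^sup>2"
      using t by (simp add: c_def norm_mult power_mult_distrib)
    moreover have "(l2norm h)\<^sup>2 \<le> (l2norm (h + sc c s))\<^sup>2"
      using min[of c] h by (simp add: power_mono)
    ultimately have "0 \<le> t * (cmod \<beta>)\<^sup>2 * (t * (l2norm s)\<^sup>2 - 2)"
      using expand[of c] by (simp add: algebra_simps power2_eq_square)
    moreover have "t * (cmod \<beta>)\<^sup>2 > 0"
      using t \<open>\<beta> \<noteq> 0\<close> by simp
    ultimately show False
      using t by (simp add: zero_le_mult_iff)
  qed
  then show ?thesis
    using l2inner_commute_cnj[OF s h] by (simp add: \<beta>_def)
qed

lemma l2norm_diff_l2lim_ge: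
  assumes u: "\<And>k. u k \<in> S" and S: "S \<subseteq> l2" and v: "v \<in> l2" and a: "a \<in> l2"
    and lim: "l2lim u v" and bound: "\<And>s. s \<in> S \<Longrightarrow> r \<le> l2norm (a - s)"
  shows "r \<le> l2norm (a - v)"
proof (rule LIMSEQ_le_const)
  show "(\<lambda>k. l2norm (a - u k)) \<longlonglongrightarrow> l2norm (a - v)"
    using u S v a lim by (intro l2lim_norm_diff) auto
qed (use u bound in blast)

lemma l2_subspace_parallelogram_bound:
  assumes S: "S \<subseteq> l2" and lin: "\<And>x y a b. x \<in> S \<Longrightarrow> y \<in> S \<Longrightarrow> sc a x + sc b y \<in> S"
    and a: "a \<in> l2" and low: "\<And>s. s \<in> S \<Longrightarrow> \<delta> \<le> (l2norm (a - s))\<^sup>2"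
    and x: "x \<in> S" and y: "y \<in> S"
  shows "(l2norm (x - y))\<^sup>2 \<le> 2 * (l2norm (a - x))\<^sup>2 + 2 * (l2norm (a - y))\<^sup>2 - 4 * \<delta>"
proof -
  have mid: "sc (1/2) x + sc (1/2) y \<in> S"
    using lin[OF x y] .
  have "(a - x) + (a - y) = sc 2 (a - (sc (1/2) x + sc (1/2) y))"
    by (auto simp: sc_def algebra_simps)
  then have "4 * \<delta> \<le> (l2norm ((a - x) + (a - y)))\<^sup>2"
    using low[OF mid] a mid S by (auto simp: l2norm_sc power_mult_distrib)
  moreover have "(l2norm (x - y))\<^sup>2 =
      2 * (l2norm (a - x))\<^sup>2 + 2 * (l2norm (a - y))\<^sup>2 - (l2norm ((a - x) + (a - y)))\<^sup>2"
    using l2norm_parallelogram[of "a - x" "a - y"] l2norm_minus_commute[of x y] a x y S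
    by (auto simp: subset_iff)
  ultimately show ?thesis
    by simp
qed

lemma l2_l2lim_of_Cauchy_bound:
  assumes u: "\<And>k. u k \<in> l2"
    and bound: "\<And>m n. (l2norm (u m - u n))\<^sup>2 \<le> 2 / real (Suc m) + 2 / real (Suc n)"
  shows "\<exists>v\<in>l2. l2lim u v"
proof (rule l2_Cauchy_l2lim[OF u])
  fix e :: real assume "e > 0"
  then obtain N where N: "4 / e\<^sup>2 < real N"
    using reals_Archimedean2 by blast
  have "l2norm (u m - u n) < e" if "m \<ge> N" "n \<ge> N" for m n
  proof -
    have "2 / real (Suc m) \<le> 2 / real (Suc N)" "2 / real (Suc n) \<le> 2 / real (Suc N)"
      using that by (simp_all add: frac_le)
    moreover have "4 / real (Suc N) < e\<^sup>2"
    proof -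
      have "4 < e\<^sup>2 * real N"
        using N \<open>e > 0\<close> by (simp add: field_simps)
      also have "\<dots> < e\<^sup>2 * real (Suc N)"
        using \<open>e > 0\<close> by simp
      finally show ?thesis
        by (simp add: field_simps)
    qed
    ultimately have "(l2norm (u m - u n))\<^sup>2 < e\<^sup>2"
      using bound[of m n] by linarith
    then show ?thesis
      using \<open>e > 0\<close> by (simp add: power_less_imp_less_base)
  qed
  then show "\<exists>N. \<forall>m\<ge>N. \<forall>n\<ge>N. l2norm (u m - u n) < e"
    by blast
qed

text \<open>Best approximation from a subspace: a minimizing sequence is Cauchy by the
  parallelogram law, and its limit realizes the distance.\<close>

lemma l2_best_approximation:
  assumes S: "S \<subseteq> l2" and lin: "\<And>x y a b. x \<in> S \<Longrightarrow> y \<in> S \<Longrightarrow> sc a x + sc b y \<in> S"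
    and "S \<noteq> {}" and a: "a \<in> l2"
  obtains u v where "\<And>k. u k \<in> S" "v \<in> l2" "l2lim u v"
    "\<And>s. s \<in> S \<Longrightarrow> l2norm (a - v) \<le> l2norm (a - s)"
proof -
  define D where "D = (\<lambda>s. (l2norm (a - s))\<^sup>2) ` S"
  define \<delta> where "\<delta> = Inf D"
  have "D \<noteq> {}" "bdd_below D"
    using \<open>S \<noteq> {}\<close> by (auto simp: D_def intro: bdd_belowI[of _ 0])
  then have low: "\<delta> \<le> (l2norm (a - s))\<^sup>2" if "s \<in> S" for s
    unfolding \<delta>_def D_def using that by (auto intro: cInf_lower)
  have "\<exists>s\<in>S. (l2norm (a - s))\<^sup>2 < \<delta> + 1 / real (Suc k)" for k
    using cInf_lessD[OF \<open>D \<noteq> {}\<close>, of "\<delta> + 1 / real (Suc k)"] by (auto simp: D_def \<delta>_def)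
  then obtain u where uS: "\<And>k. u k \<in> S"
    and near: "\<And>k. (l2norm (a - u k))\<^sup>2 < \<delta> + 1 / real (Suc k)"
    by metis
  have ul: "u k \<in> l2" for k
    using uS S by blast
  have "(l2norm (u m - u n))\<^sup>2 \<le> 2 / real (Suc m) + 2 / real (Suc n)" for m n
    using l2_subspace_parallelogram_bound[OF S lin a low uS uS, of m n] near[of m] near[of n]
    by simp
  then obtain v where v: "v \<in> l2" "l2lim u v"
    using l2_l2lim_of_Cauchy_bound[of u] ul by blast
  have dist: "(l2norm (a - v))\<^sup>2 \<le> \<delta>"
  proof (rule LIMSEQ_le)
    show "(\<lambda>k. (l2norm (a - u k))\<^sup>2) \<longlonglongrightarrow> (l2norm (a - v))\<^sup>2"
      using l2lim_norm_diff[OF ul v(1) a v(2)] by (rule tendsto_power)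
    show "(\<lambda>k. \<delta> + 1 / real (Suc k)) \<longlonglongrightarrow> \<delta>"
      using tendsto_add[OF tendsto_const LIMSEQ_inverse_real_of_nat] by (simp add: inverse_eq_divide)
    show "\<exists>N. \<forall>k\<ge>N. (l2norm (a - u k))\<^sup>2 \<le> \<delta> + 1 / real (Suc k)"
      using near less_imp_le by blast
  qed
  have best: "l2norm (a - v) \<le> l2norm (a - s)" if "s \<in> S" for s
  proof (rule power2_le_imp_le)
    show "(l2norm (a - v))\<^sup>2 \<le> (l2norm (a - s))\<^sup>2"
      using dist low[OF that] by linarith
  qed (use that S a in auto)
  show ?thesis
    by (rule that[OF uS v best])
qed

lemma l2_orthogonal_of_not_approximable:
  assumes S: "S \<subseteq> l2" and lin: "\<And>x y a b. x \<in> S \<Longrightarrow> y \<in> S \<Longrightarrow> sc a x + sc b y \<in> S"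
    and "S \<noteq> {}" and a: "a \<in> l2" and "e > 0" and far: "\<And>s. s \<in> S \<Longrightarrow> e \<le> l2norm (a - s)"
  shows "\<exists>h\<in>l2. h \<noteq> 0 \<and> (\<forall>s\<in>S. l2inner s h = 0)"
proof -
  obtain u v where uS: "\<And>k. u k \<in> S" and v: "v \<in> l2" "l2lim u v"
    and best: "\<And>s. s \<in> S \<Longrightarrow> l2norm (a - v) \<le> l2norm (a - s)"
    using l2_best_approximation[OF S lin \<open>S \<noteq> {}\<close> a] by metis
  have ul: "u k \<in> l2" for k
    using uS S by blast
  have "e \<le> l2norm (a - v)"
    using l2norm_diff_l2lim_ge[OF uS S v(1) a v(2) far] .
  then have "a - v \<noteq> 0"
    using \<open>e > 0\<close> by auto
  moreover have "l2inner s (a - v) = 0" if s: "s \<in> S" for s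
  proof (rule l2_orthogonal_of_minimal)
    show "s \<in> l2"
      using s S by blast
    fix c
    have lim: "l2lim (\<lambda>k. u k + sc (- c) s) (v + sc (- c) s)"
      by (rule l2lim_add[OF ul _ v(1) _ v(2) l2lim_const]) (use \<open>s \<in> l2\<close> in simp_all)
    have "u k + sc (- c) s \<in> S" for k
      using lin[OF uS[of k] s, of 1 "- c"] by (simp add: sc_def)
    then have "l2norm (a - v) \<le> l2norm (a - (v + sc (- c) s))"
      using l2norm_diff_l2lim_ge[OF _ S _ a lim best] v(1) \<open>s \<in> l2\<close> by simp
    moreover have "a - (v + sc (- c) s) = (a - v) + sc c s"
      by (simp add: fun_eq_iff)
    ultimately show "l2norm (a - v) \<le> l2norm ((a - v) + sc c s)"
      by simp
  qed (use a v in simp)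
  ultimately show ?thesis
    using l2_diff[OF a v(1)] by blast
qed

lemma closed_subspace_Int:
  "closed_subspace M \<Longrightarrow> closed_subspace N \<Longrightarrow> closed_subspace (M \<inter> N)"
  unfolding closed_subspace_def by blast

lemma closed_subspace_equalizer:
  assumes B: "\<And>i. is_contraction (B i)" and C: "\<And>i. is_contraction (C i)"
  shows "closed_subspace {x \<in> l2. \<forall>i. B i x = C i x}"
  unfolding closed_subspace_def
proof (intro conjI allI impI ballI)
  show "(\<lambda>n. 0) \<in> {x \<in> l2. \<forall>i. B i x = C i x}"
    using contraction_zero[OF B] contraction_zero[OF C] l2_zero by (simp add: zero_fun_def)
next
  fix x y a b assume "x \<in> {x \<in> l2. \<forall>i. B i x = C i x}" "y \<in> {x \<in> l2. \<forall>i. B i x = C i x}"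
  then show "(\<lambda>n. a * x n + b * y n) \<in> {x \<in> l2. \<forall>i. B i x = C i x}"
    by (simp add: contraction_lincomb[OF B] contraction_lincomb[OF C])
next
  fix u x assume "(\<forall>k. u k \<in> {x \<in> l2. \<forall>i. B i x = C i x}) \<and> x \<in> l2 \<and>
      (\<lambda>k. l2norm (\<lambda>n. u k n - x n)) \<longlonglongrightarrow> 0"
  then have u: "\<And>k. u k \<in> l2" "\<And>k i. B i (u k) = C i (u k)" and x: "x \<in> l2" and lim: "l2lim u x"
    by (auto simp: l2lim_def fun_diff_def)
  have "B i x = C i x" for i
  proof (rule l2lim_unique)
    show "l2lim (\<lambda>k. C i (u k)) (B i x)"
      using contraction_l2lim[OF B u(1) x lim] u(2) by simp
    show "l2lim (\<lambda>k. C i (u k)) (C i x)"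
      using contraction_l2lim[OF C u(1) x lim] .
  qed (use u B C x in \<open>simp_all add: contraction_l2\<close>)
  with x show "x \<in> {x \<in> l2. \<forall>i. B i x = C i x}"
    by simp
qed auto

section \<open>Neumann series\<close>

lemma contraction_neumann_series:
  assumes B: "is_contraction B" and d: "d \<in> l2" and t: "0 \<le> t" "t < 1"
  shows "\<exists>z\<in>l2. z = d + sc (of_real t) (B z) \<and>
    (\<forall>h\<in>l2. (\<lambda>n. of_real (t ^ n) * l2inner ((B ^^ n) d) h) sums l2inner z h)"
proof -
  define v where "v n = sc (of_real (t ^ n)) ((B ^^ n) d)" for n
  have Bn: "(B ^^ n) d \<in> l2" for n
    using contraction_l2[OF is_contraction_funpow[OF B] d] .
  have v: "v n \<in> l2" for n
    using Bn by (simp add: v_def)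
  have "l2norm (v n) \<le> l2norm d * t ^ n" for n
    using mult_left_mono[OF contraction_norm_le[OF is_contraction_funpow[OF B] d, of n], of "t ^ n"] Bn t
    by (simp add: v_def l2norm_sc norm_power mult.commute)
  moreover have "summable (\<lambda>n. l2norm d * t ^ n)"
    using t by (intro summable_mult summable_geometric) simp
  ultimately have "summable (\<lambda>n. l2norm (v n))"
    using v by (metis summable_comparison_test' l2norm_nonneg real_norm_def abs_of_nonneg)
  then obtain z where z: "z \<in> l2" and lim: "l2lim (\<lambda>N. \<Sum>n<N. v n) z"
    using l2_summable_norm_l2lim[of v] v by auto
  define P where "P N = (\<Sum>n<N. v n)" for N
  have P: "P N \<in> l2" for N
    using v by (simp add: P_def l2_sum)
  have lim: "l2lim P z"
    using lim by (simp add: P_def[abs_def])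
  have P_Suc: "P (Suc N) = d + sc (of_real t) (B (P N))" for N
  proof -
    have "P (Suc N) = v 0 + (\<Sum>n<N. v (Suc n))"
      unfolding P_def by (rule sum.lessThan_Suc_shift)
    moreover have "v 0 = d"
      by (simp add: v_def sc_def)
    moreover have "B (P N) = (\<Sum>n<N. B (v n))"
      unfolding P_def by (rule contraction_sum[OF B v])
    moreover have "sc (of_real t) (B (v n)) = v (Suc n)" for n
      using contraction_sc[OF B Bn] by (simp add: v_def sc_def mult.assoc)
    ultimately show ?thesis
      by (simp add: sc_sum)
  qed
  have "z = d + sc (of_real t) (B z)"
  proof (rule l2lim_unique[of "\<lambda>N. P (Suc N)"])
    show "l2lim (\<lambda>N. P (Suc N)) z"
      by (rule l2lim_Suc[OF lim])
    have "l2lim (\<lambda>N. d + sc (of_real t) (B (P N))) (d + sc (of_real t) (B z))"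
      by (rule l2lim_add[OF _ _ d _ l2lim_const l2lim_sc[OF _ _ contraction_l2lim[OF B P z lim]]])
        (use B P z d in \<open>simp_all add: contraction_l2\<close>)
    then show "l2lim (\<lambda>N. P (Suc N)) (d + sc (of_real t) (B z))"
      by (simp add: P_Suc)
  qed (use B P z d in \<open>simp_all add: contraction_l2\<close>)
  moreover have "(\<lambda>n. of_real (t ^ n) * l2inner ((B ^^ n) d) h) sums l2inner z h" if h: "h \<in> l2" for h
  proof -
    have "(\<lambda>N. l2inner (P N) h) \<longlonglongrightarrow> l2inner z h"
      by (rule l2lim_inner[OF P z h lim])
    moreover have "l2inner (P N) h = (\<Sum>n<N. of_real (t ^ n) * l2inner ((B ^^ n) d) h)" for N
      using v h Bn by (simp add: P_def l2inner_sum_left v_def l2inner_sc_left)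
    ultimately show ?thesis
      unfolding sums_def by simp
  qed
  ultimately show ?thesis
    using z by (intro bexI[of _ z]) auto
qed

lemma power_series_shifted_coeff_bound:
  fixes c :: "nat \<Rightarrow> complex"
  assumes bounded: "\<And>k. cmod (c k) \<le> M"
    and sums: "(\<lambda>k. of_real (t ^ k) * c (k + n)) sums 0" and t: "0 < t" "t \<le> 1 / 2"
  shows "cmod (c n) \<le> 2 * M * t"
proof -
  have M: "0 \<le> M"
    using bounded[of 0] norm_ge_zero order_trans by blast
  have "(\<lambda>k. of_real (t ^ Suc k) * c (Suc k + n)) sums (- c n)"
    using sums_split_initial_segment[OF sums, of 1] by simp
  then have "cmod (c n) = cmod (\<Sum>k. of_real (t ^ Suc k) * c (Suc k + n))"
    by (simp add: sums_iff)
  also have "\<dots> \<le> (\<Sum>k. M * t * t ^ k)"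
  proof (rule norm_suminf_le)
    show "norm (of_real (t ^ Suc k) * c (Suc k + n)) \<le> M * t * t ^ k" for k
      using mult_left_mono[OF bounded[of "Suc k + n"], of "t ^ Suc k"] t
      by (simp add: norm_mult norm_power mult_ac)
    show "summable (\<lambda>k. M * t * t ^ k)"
      using t by (intro summable_mult summable_geometric) simp
  qed
  also have "\<dots> = M * t / (1 - t)"
    using t by (simp add: suminf_mult suminf_geometric)
  also have "\<dots> \<le> M * t / (1 / 2)"
    using M t by (intro divide_left_mono) auto
  finally show ?thesis
    by simp
qed

text \<open>A power series with bounded coefficients that vanishes on \<open>(0, 1)\<close> has zero
  coefficients: dividing out the vanishing initial terms, the leading coefficient is
  \<open>O(t)\<close>.\<close>

lemma power_series_vanishing_coeffs_zero:
  fixes c :: "nat \<Rightarrow> complex"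
  assumes bounded: "\<And>k. cmod (c k) \<le> M"
    and zero: "\<And>t. 0 < t \<Longrightarrow> t < 1 \<Longrightarrow> (\<lambda>k. of_real (t ^ k) * c k) sums 0"
  shows "c n = 0"
proof (induction n rule: less_induct)
  case (less n)
  have bound: "cmod (c n) \<le> 2 * M * t" if t: "0 < t" "t \<le> 1 / 2" for t
  proof (rule power_series_shifted_coeff_bound[OF bounded _ t])
    have "(\<lambda>k. of_real (t ^ (k + n)) * c (k + n)) sums 0"
      using sums_split_initial_segment[OF zero[of t], of n] t less by simp
    from sums_mult[OF this, of "inverse (of_real (t ^ n))"]
    show "(\<lambda>k. of_real (t ^ k) * c (k + n)) sums 0"
      using t by (simp add: power_add field_simps)
  qed
  show "c n = 0"
  proof (rule ccontr)
    assume "c n \<noteq> 0"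
    have M: "0 \<le> M"
      using bounded[of 0] norm_ge_zero order_trans by blast
    define t where "t = min (1 / 2) (cmod (c n) / (4 * M + 1))"
    have "0 < t"
      using \<open>c n \<noteq> 0\<close> M by (simp add: t_def)
    have "t \<le> 1 / 2"
      unfolding t_def by (rule min.cobounded1)
    have "2 * M * t \<le> 2 * M * (cmod (c n) / (4 * M + 1))"
      using M by (intro mult_left_mono) (auto simp: t_def)
    also have "\<dots> < cmod (c n)"
      using M \<open>c n \<noteq> 0\<close> by (simp add: field_simps add_pos_nonneg)
    finally show False
      using bound[OF \<open>0 < t\<close> \<open>t \<le> 1 / 2\<close>] by simp
  qed
qed

lemma neumann_orthogonal_coeffs:
  assumes C: "is_contraction C" and d: "d \<in> l2" and h: "h \<in> l2"
    and orth: "\<And>t z. 0 < t \<Longrightarrow> t < 1 \<Longrightarrow> z \<in> l2 \<Longrightarrow> z = d + sc (of_real t) (C z) \<Longrightarrow>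
      l2inner z h = 0"
  shows "l2inner ((C ^^ n) d) h = 0"
proof (rule power_series_vanishing_coeffs_zero)
  show "cmod (l2inner ((C ^^ k) d) h) \<le> l2norm d * l2norm h" for k
    using l2_Cauchy_Schwarz[OF contraction_l2[OF is_contraction_funpow[OF C] d] h, of k]
      mult_right_mono[OF contraction_norm_le[OF is_contraction_funpow[OF C] d], of "l2norm h" k] h
    by simp
  fix t :: real assume t: "0 < t" "t < 1"
  then obtain z where "z \<in> l2" "z = d + sc (of_real t) (C z)"
    and "\<forall>h\<in>l2. (\<lambda>k. of_real (t ^ k) * l2inner ((C ^^ k) d) h) sums l2inner z h"
    using contraction_neumann_series[OF C d, of t] by auto
  with orth[OF t] h show "(\<lambda>k. of_real (t ^ k) * l2inner ((C ^^ k) d) h) sums 0"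
    by metis
qed

text \<open>If \<open>h\<close> is orthogonal to every solution of \<open>z = (I - C B) w + t C z\<close>, then by
  expanding \<open>z\<close> in a Neumann series all \<open>\<langle>C\<^sup>n (I - C B) w, h\<rangle> = \<langle>w, (I - C B) B\<^sup>n h\<rangle>\<close>
  vanish.\<close>

lemma adjoint_pair_fixed_of_orthogonal_resolvents:
  assumes BC: "adjoint_pair B C" and h: "h \<in> l2"
    and orth: "\<And>w t z. w \<in> l2 \<Longrightarrow> 0 < t \<Longrightarrow> t < 1 \<Longrightarrow> z \<in> l2 \<Longrightarrow>
      z = (w - C (B w)) + sc (of_real t) (C z) \<Longrightarrow> l2inner z h = 0"
  shows "C (B ((B ^^ n) h)) = (B ^^ n) h"
proof -
  have B: "is_contraction B" and C: "is_contraction C"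
    using BC by (auto simp: adjoint_pair_def)
  define u where "u = (B ^^ n) h"
  have u: "u \<in> l2"
    unfolding u_def using contraction_l2[OF is_contraction_funpow[OF B] h] .
  have CBu: "C (B u) \<in> l2"
    using B C u by (simp add: contraction_l2)
  have "u - C (B u) = 0"
  proof (rule l2_orthogonal_all_eq_0)
    show "u - C (B u) \<in> l2"
      using u CBu by simp
    fix w assume w: "w \<in> l2"
    have d: "w - C (B w) \<in> l2"
      using w B C by (simp add: contraction_l2)
    have "l2inner w (u - C (B u)) = l2inner (w - C (B w)) u"
      by (rule adjoint_pair_defect_selfadjoint[OF BC w u, symmetric])
    also have "\<dots> = l2inner ((C ^^ n) (w - C (B w))) h"
      unfolding u_def
      using adjoint_pair_inner[OF adjoint_pair_funpow[OF adjoint_pair_sym[OF BC]] d h] by simp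
    also have "\<dots> = 0"
      using neumann_orthogonal_coeffs[OF C d h] orth[OF w] by blast
    finally show "l2inner w (u - C (B u)) = 0" .
  qed
  then show ?thesis
    by (simp add: u_def)
qed

section \<open>The span of the sets \<open>N\<^sub>\<lambda>\<close> and the unitary part\<close>

lemma kspan_zero: "(0, 0) \<in> kspan X"
  unfolding kspan_def by (auto simp: zero_fun_def intro!: exI[of _ "{}"])

lemma kspan_superset: "X \<subseteq> kspan X"
  unfolding kspan_def by (force intro!: exI[of _ "\<lambda>_. 1"])

lemma kspan_lincomb:
  assumes "p \<in> kspan X" and "q \<in> kspan X"
  shows "((\<lambda>n. a * fst p n + b * fst q n), (\<lambda>n. a * snd p n + b * snd q n)) \<in> kspan X"
proof -
  obtain F1 c1 where F1: "finite F1" "F1 \<subseteq> X"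
    and p: "p = ((\<lambda>n. \<Sum>x\<in>F1. c1 x * fst x n), (\<lambda>n. \<Sum>x\<in>F1. c1 x * snd x n))"
    using assms(1) unfolding kspan_def by blast
  obtain F2 c2 where F2: "finite F2" "F2 \<subseteq> X"
    and q: "q = ((\<lambda>n. \<Sum>x\<in>F2. c2 x * fst x n), (\<lambda>n. \<Sum>x\<in>F2. c2 x * snd x n))"
    using assms(2) unfolding kspan_def by blast
  define c where "c x = a * (if x \<in> F1 then c1 x else 0) + b * (if x \<in> F2 then c2 x else 0)" for x
  have "(\<Sum>x\<in>F1 \<union> F2. c x * g x) = a * (\<Sum>x\<in>F1. c1 x * g x) + b * (\<Sum>x\<in>F2. c2 x * g x)"
    for g :: "kvec \<Rightarrow> complex"
  proof -
    have "c x * g x = a * (if x \<in> F1 then c1 x * g x else 0) + b * (if x \<in> F2 then c2 x * g x else 0)"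
      for x
      by (simp add: c_def algebra_simps)
    then have "(\<Sum>x\<in>F1 \<union> F2. c x * g x) = a * (\<Sum>x\<in>F1 \<union> F2. if x \<in> F1 then c1 x * g x else 0) +
        b * (\<Sum>x\<in>F1 \<union> F2. if x \<in> F2 then c2 x * g x else 0)"
      by (simp add: sum.distrib sum_distrib_left)
    also have "\<dots> = a * (\<Sum>x\<in>F1. c1 x * g x) + b * (\<Sum>x\<in>F2. c2 x * g x)"
      using F1(1) F2(1) by (simp add: sum.inter_restrict[symmetric] Int_absorb1 Int_absorb2)
    finally show ?thesis .
  qed
  then show ?thesis
    unfolding kspan_def using F1 F2
    by (auto simp: p q intro!: exI[of _ "F1 \<union> F2"] exI[of _ c])
qed

lemma sorth_AT_iff:
  "p \<in> sorth (AT T) \<longleftrightarrow>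
    fst p \<in> l2 \<and> snd p \<in> l2 \<and> (\<forall>k\<in>KK T. l2inner (fst p) k = l2inner (snd p) (T k))"
  by (auto simp: sorth_def kspace_def AT_def kform_def mem_Times_iff right_diff_distrib[symmetric])

lemma kspan_subset_sorth:
  assumes X: "X \<subseteq> sorth Y" and Y: "Y \<subseteq> kspace"
  shows "kspan X \<subseteq> sorth Y"
proof
  fix v assume "v \<in> kspan X"
  then obtain F c where F: "finite F" "F \<subseteq> X"
    and v: "v = ((\<lambda>n. \<Sum>x\<in>F. c x * fst x n), (\<lambda>n. \<Sum>x\<in>F. c x * snd x n))"
    unfolding kspan_def by blast
  have l2: "fst x \<in> l2" "snd x \<in> l2" if "x \<in> F" for x
    using that F X by (auto simp: sorth_def kspace_def)
  have "kform v b = 0" if b: "b \<in> Y" for b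
  proof -
    have "fst b \<in> l2" "snd b \<in> l2"
      using b Y by (auto simp: kspace_def)
    then have "kform v b = (\<Sum>x\<in>F. c x * kform x b)"
      using l2 by (simp add: v kform_def sum_mult_eq_sum_sc l2inner_sum_left l2inner_sc_left
          sum_distrib_left sum_subtractf algebra_simps)
    also have "\<dots> = 0"
      using F X b by (intro sum.neutral) (auto simp: sorth_def)
    finally show ?thesis .
  qed
  then show "v \<in> sorth Y"
    using l2 by (simp add: sorth_def kspace_def v sum_mult_eq_sum_sc l2_sum)
qed

lemma AT_subset_kspace: "is_contraction T \<Longrightarrow> AT T \<subseteq> kspace"
  by (auto simp: AT_def KK_def kspace_def contraction_l2)

lemma NN_subset_sorth: "is_contraction T \<Longrightarrow> NN T \<subseteq> sorth (AT T)"
  unfolding NN_def by (rule kspan_subset_sorth[OF _ AT_subset_kspace]) (auto simp: Nplus_def Nminus_def)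

lemma Nplus_subset_NN: "cmod l < 1 \<Longrightarrow> Nplus T l \<subseteq> NN T"
  unfolding NN_def by (rule order_trans[OF _ kspan_superset]) auto

lemma Nminus_subset_NN: "cmod l < 1 \<Longrightarrow> Nminus T l \<subseteq> NN T"
  unfolding NN_def by (rule order_trans[OF _ kspan_superset]) auto

lemma Nplus_of_resolvent:
  assumes T: "is_contraction T" and w: "w \<in> l2" and x: "x \<in> l2"
    and x_eq: "x = (w - adjoint T (T w)) + sc l (adjoint T x)"
  shows "(x, sc l x) \<in> Nplus T l"
proof -
  let ?A = "adjoint T"
  have TA: "adjoint_pair T ?A"
    by (rule adjoint_pair_adjoint[OF T])
  have contr: "is_contraction ?A"
    by (rule is_contraction_adjoint[OF T])
  have "l2inner x k = l2inner (sc l x) (T k)" if "k \<in> KK T" for k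
  proof -
    have k: "k \<in> l2" "?A (T k) = k"
      using that by (auto simp: KK_def)
    have "l2inner (w - ?A (T w)) k = l2inner w (k - ?A (T k))"
      by (rule adjoint_pair_defect_selfadjoint[OF TA w k(1)])
    also have "\<dots> = 0"
      using k w by simp
    finally have defect: "l2inner (w - ?A (T w)) k = 0" .
    have "l2inner x k = l2inner ((w - ?A (T w)) + sc l (?A x)) k"
      using x_eq by (rule arg_cong)
    also have "\<dots> = l * l2inner (?A x) k"
      using w x k defect T contr by (simp add: l2inner_add_left l2inner_sc_left contraction_l2)
    also have "\<dots> = l2inner (sc l x) (T k)"
      using adjoint_pair_inner[OF adjoint_pair_sym[OF TA] x k(1)] x k T
      by (simp add: l2inner_sc_left contraction_l2)
    finally show ?thesis .
  qed
  then show ?thesis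
    unfolding Nplus_def using x by (auto simp: sorth_AT_iff)
qed

lemma Nminus_of_resolvent:
  assumes T: "is_contraction T" and w: "w \<in> l2" and z: "z \<in> l2"
    and z_eq: "z = (w - T (adjoint T w)) + sc l (T z)"
  shows "(sc l z, z) \<in> Nminus T l"
proof -
  let ?A = "adjoint T"
  have AT: "adjoint_pair ?A T"
    by (rule adjoint_pair_sym[OF adjoint_pair_adjoint[OF T]])
  have contr: "is_contraction ?A"
    by (rule is_contraction_adjoint[OF T])
  have "l2inner (sc l z) k = l2inner z (T k)" if "k \<in> KK T" for k
  proof -
    have k: "k \<in> l2" "?A (T k) = k"
      using that by (auto simp: KK_def)
    have Tk: "T k \<in> l2"
      using T k by (simp add: contraction_l2)
    have "l2inner (w - T (?A w)) (T k) = l2inner w (T k - T (?A (T k)))"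
      by (rule adjoint_pair_defect_selfadjoint[OF AT w Tk])
    also have "\<dots> = 0"
      using k w by simp
    finally have defect: "l2inner (w - T (?A w)) (T k) = 0" .
    have "l2inner z (T k) = l2inner ((w - T (?A w)) + sc l (T z)) (T k)"
      using z_eq by (rule arg_cong)
    also have "\<dots> = l * l2inner (T z) (T k)"
      using w z Tk defect T contr by (simp add: l2inner_add_left l2inner_sc_left contraction_l2)
    also have "\<dots> = l2inner (sc l z) k"
      using adjoint_pair_inner[OF adjoint_pair_sym[OF AT] z Tk] z k
      by (simp add: l2inner_sc_left)
    finally show ?thesis
      by simp
  qed
  then show ?thesis
    unfolding Nminus_def using z by (auto simp: sorth_AT_iff)
qed

text \<open>The unitary part of \<open>T\<close> in its canonical decomposition: the largest subspace reducing
  \<open>T\<close> to a unitary operator.\<close>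

definition unitary_part :: "((nat \<Rightarrow> complex) \<Rightarrow> nat \<Rightarrow> complex) \<Rightarrow> (nat \<Rightarrow> complex) set" where
  "unitary_part T = {x \<in> l2. \<forall>n. adjoint T (T ((T ^^ n) x)) = (T ^^ n) x \<and>
     T (adjoint T ((adjoint T ^^ n) x)) = (adjoint T ^^ n) x}"

lemma unitary_part_iterates:
  assumes "x \<in> unitary_part T"
  shows "x \<in> l2" "adjoint T (T ((T ^^ n) x)) = (T ^^ n) x"
    "T (adjoint T ((adjoint T ^^ n) x)) = (adjoint T ^^ n) x"
  using assms by (simp_all add: unitary_part_def)

lemma closed_subspace_unitary_part:
  assumes T: "is_contraction T"
  shows "closed_subspace (unitary_part T)"
proof -
  let ?A = "adjoint T"
  have A: "is_contraction ?A"
    by (rule is_contraction_adjoint[OF T])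
  have "closed_subspace {x \<in> l2. \<forall>n. (?A \<circ> T \<circ> T ^^ n) x = (T ^^ n) x}"
    using T A by (intro closed_subspace_equalizer is_contraction_comp is_contraction_funpow)
  moreover have "closed_subspace {x \<in> l2. \<forall>n. (T \<circ> ?A \<circ> ?A ^^ n) x = (?A ^^ n) x}"
    using T A by (intro closed_subspace_equalizer is_contraction_comp is_contraction_funpow)
  moreover have "unitary_part T = {x \<in> l2. \<forall>n. (?A \<circ> T \<circ> T ^^ n) x = (T ^^ n) x} \<inter>
      {x \<in> l2. \<forall>n. (T \<circ> ?A \<circ> ?A ^^ n) x = (?A ^^ n) x}"
    by (auto simp: unitary_part_def)
  ultimately show ?thesis
    by (simp only: closed_subspace_Int)
qed

lemma unitary_part_apply:
  assumes T: "is_contraction T" and x: "x \<in> unitary_part T"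
  shows "T x \<in> unitary_part T"
proof -
  let ?A = "adjoint T"
  note U = unitary_part_iterates[OF x]
  have "?A (T ((T ^^ n) (T x))) = (T ^^ n) (T x)" for n
    using U(2)[of "Suc n"] by (simp add: funpow_swap1)
  moreover have "T (?A ((?A ^^ n) (T x))) = (?A ^^ n) (T x)" for n
  proof (cases n)
    case (Suc m)
    have "(?A ^^ n) (T x) = (?A ^^ m) x"
      using U(2)[of 0] by (simp add: Suc funpow_swap1)
    then show ?thesis
      using U(3)[of m] by simp
  qed (use U(2)[of 0] in simp)
  ultimately show ?thesis
    using U(1) T by (simp add: unitary_part_def contraction_l2)
qed

lemma unitary_part_adjoint_apply:
  assumes T: "is_contraction T" and x: "x \<in> unitary_part T"
  shows "adjoint T x \<in> unitary_part T"
proof -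
  let ?A = "adjoint T"
  note U = unitary_part_iterates[OF x]
  have "?A (T ((T ^^ n) (?A x))) = (T ^^ n) (?A x)" for n
  proof (cases n)
    case (Suc m)
    have "(T ^^ n) (?A x) = (T ^^ m) x"
      using U(3)[of 0] by (simp add: Suc funpow_swap1)
    then show ?thesis
      using U(2)[of m] by simp
  qed (use U(3)[of 0] in simp)
  moreover have "T (?A ((?A ^^ n) (?A x))) = (?A ^^ n) (?A x)" for n
    using U(3)[of "Suc n"] by (simp add: funpow_swap1)
  ultimately show ?thesis
    using U(1) T by (simp add: unitary_part_def adjoint_l2)
qed

lemma unitary_part_image:
  assumes T: "is_contraction T"
  shows "T ` unitary_part T = unitary_part T"
proof -
  have "x = T (adjoint T x)" if "x \<in> unitary_part T" for x
    using unitary_part_iterates(3)[OF that, of 0] by simp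
  then show ?thesis
    using unitary_part_apply[OF T] unitary_part_adjoint_apply[OF T] by blast
qed

lemma cnu_unitary_part_trivial:
  assumes T: "is_contraction T" and cnu: "cnu T" and x: "x \<in> unitary_part T"
  shows "x = 0"
proof -
  have "l2norm (T y) = l2norm y" if y: "y \<in> unitary_part T" for y
  proof -
    note U = unitary_part_iterates[OF y]
    have "l2inner (T y) (T y) = l2inner y y"
      using l2inner_adjoint[OF T U(1) contraction_l2[OF T U(1)]] U(2)[of 0] by simp
    then have "complex_of_real ((l2norm (T y))\<^sup>2) = complex_of_real ((l2norm y)\<^sup>2)"
      using T U(1) by (metis l2inner_self contraction_l2)
    then show ?thesis
      using T U(1) by (simp only: of_real_eq_iff) (simp add: contraction_l2)
  qed
  then have "unitary_part T = {\<lambda>n. 0}"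
    using cnu closed_subspace_unitary_part[OF T] unitary_part_image[OF T] unfolding cnu_def by blast
  with x show ?thesis
    by (simp add: zero_fun_def)
qed

section \<open>Density\<close>

lemma snd_NN_orthogonal_imp_unitary_part:
  assumes T: "is_contraction T" and h: "h \<in> l2" and orth: "\<And>b. b \<in> NN T \<Longrightarrow> l2inner (snd b) h = 0"
  shows "h \<in> unitary_part T"
proof -
  let ?A = "adjoint T"
  have "?A (T ((T ^^ n) h)) = (T ^^ n) h" for n
  proof (rule adjoint_pair_fixed_of_orthogonal_resolvents[OF adjoint_pair_adjoint[OF T] h])
    fix w t z assume w: "w \<in> l2" and t: "0 < t" "t < 1" and z: "z \<in> l2"
      and z_eq: "z = (w - ?A (T w)) + sc (of_real t) (?A z)"
    have "(z, sc (of_real t) z) \<in> NN T"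
      using Nplus_of_resolvent[OF T w z z_eq] Nplus_subset_NN[of "of_real t" T] t by auto
    then have "of_real t * l2inner z h = 0"
      using orth z h by (fastforce simp: l2inner_sc_left)
    then show "l2inner z h = 0"
      using t by simp
  qed
  moreover have "T (?A ((?A ^^ n) h)) = (?A ^^ n) h" for n
  proof (rule adjoint_pair_fixed_of_orthogonal_resolvents[OF
        adjoint_pair_sym[OF adjoint_pair_adjoint[OF T]] h])
    fix w t z assume w: "w \<in> l2" and t: "0 < t" "t < 1" and z: "z \<in> l2"
      and z_eq: "z = (w - T (?A w)) + sc (of_real t) (T z)"
    have "(sc (of_real t) z, z) \<in> NN T"
      using Nminus_of_resolvent[OF T w z z_eq] Nminus_subset_NN[of "of_real t" T] t by auto
    then show "l2inner z h = 0"
      using orth by fastforce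
  qed
  ultimately show ?thesis
    using h by (simp add: unitary_part_def)
qed

lemma snd_NN_dense:
  assumes T: "is_contraction T" and cnu: "cnu T" and y: "y \<in> l2" and "e > 0"
  shows "\<exists>b\<in>NN T. l2norm (y - snd b) < e"
proof (rule ccontr)
  assume "\<not> ?thesis"
  then have far: "e \<le> l2norm (y - s)" if "s \<in> snd ` NN T" for s
    using that by (auto simp: not_less)
  have S: "snd ` NN T \<subseteq> l2"
    using NN_subset_sorth[OF T] by (auto simp: sorth_AT_iff)
  have lin: "sc a x + sc b z \<in> snd ` NN T" if x: "x \<in> snd ` NN T" and z: "z \<in> snd ` NN T"
    for x z a b
  proof -
    obtain p q where pq: "p \<in> NN T" "q \<in> NN T" and xz: "x = snd p" "z = snd q"
      using x z by blast
    from pq have "((\<lambda>n. a * fst p n + b * fst q n), (\<lambda>n. a * snd p n + b * snd q n)) \<in> NN T"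
      unfolding NN_def by (rule kspan_lincomb)
    moreover have "sc a x + sc b z = snd ((\<lambda>n. a * fst p n + b * fst q n), (\<lambda>n. a * snd p n + b * snd q n))"
      by (simp add: xz lincomb_eq_sc)
    ultimately show ?thesis
      by (rule rev_image_eqI)
  qed
  have "snd ` NN T \<noteq> {}"
    using kspan_zero unfolding NN_def by blast
  then obtain h where h: "h \<in> l2" "h \<noteq> 0" and orth: "\<forall>s\<in>snd ` NN T. l2inner s h = 0"
    using l2_orthogonal_of_not_approximable[OF S lin _ y \<open>e > 0\<close> far] by auto
  then have "h \<in> unitary_part T"
    by (intro snd_NN_orthogonal_imp_unitary_part[OF T]) auto
  with h(2) show False
    using cnu_unitary_part_trivial[OF T cnu] by blast
qed

lemma sorth_AT_diff_correction:
  assumes T: "is_contraction T" and a: "a \<in> sorth (AT T)" and b: "b \<in> sorth (AT T)"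
  defines "d \<equiv> fst a - fst b - adjoint T (snd a - snd b)"
  shows "(d, sc 0 d) \<in> Nplus T 0"
proof -
  let ?u = "snd a - snd b"
  have l2: "fst a \<in> l2" "snd a \<in> l2" "fst b \<in> l2" "snd b \<in> l2" "?u \<in> l2" "adjoint T ?u \<in> l2"
    using a b T by (auto simp: sorth_AT_iff adjoint_l2)
  have "l2inner d k = l2inner (sc 0 d) (T k)" if k: "k \<in> KK T" for k
  proof -
    have kl: "k \<in> l2" "T k \<in> l2"
      using k T by (auto simp: KK_def contraction_l2)
    have "l2inner d k = l2inner (fst a) k - l2inner (fst b) k - l2inner (adjoint T ?u) k"
      using l2 kl by (simp add: d_def l2inner_diff_left)
    also have "\<dots> = l2inner (snd a) (T k) - l2inner (snd b) (T k) - l2inner ?u (T k)"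
      using a b k adjoint_pair_inner[OF adjoint_pair_sym[OF adjoint_pair_adjoint[OF T]] l2(5) kl(1)]
      by (simp add: sorth_AT_iff)
    also have "\<dots> = 0"
      using l2 kl by (simp add: l2inner_diff_left)
    finally show ?thesis
      using l2 kl by (simp add: d_def l2inner_sc_left)
  qed
  then show ?thesis
    using l2 by (auto simp: Nplus_def sorth_AT_iff d_def)
qed

lemma NN_correction:
  assumes T: "is_contraction T" and a: "a \<in> sorth (AT T)" and b0: "b0 \<in> NN T"
  shows "\<exists>b\<in>NN T. kdiff a b = (adjoint T (snd a - snd b0), snd a - snd b0)"
proof -
  define d where "d = fst a - fst b0 - adjoint T (snd a - snd b0)"
  have "b0 \<in> sorth (AT T)"
    using NN_subset_sorth[OF T] b0 by blast
  then have "(d, sc 0 d) \<in> Nplus T 0"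
    unfolding d_def by (rule sorth_AT_diff_correction[OF T a])
  then have "(d, sc 0 d) \<in> NN T"
    using Nplus_subset_NN[of 0 T] by auto
  with b0 have "((\<lambda>n. 1 * fst b0 n + 1 * fst (d, sc 0 d) n),
      (\<lambda>n. 1 * snd b0 n + 1 * snd (d, sc 0 d) n)) \<in> NN T"
    unfolding NN_def by (rule kspan_lincomb)
  moreover have "kdiff a ((\<lambda>n. 1 * fst b0 n + 1 * fst (d, sc 0 d) n),
      (\<lambda>n. 1 * snd b0 n + 1 * snd (d, sc 0 d) n)) = (adjoint T (snd a - snd b0), snd a - snd b0)"
    by (simp add: kdiff_def d_def fun_eq_iff)
  ultimately show ?thesis
    by blast
qed

lemma knorm_adjoint_le:
  assumes T: "is_contraction T" and u: "u \<in> l2"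
  shows "knorm (adjoint T u, u) \<le> 2 * l2norm u"
proof -
  have "knorm (adjoint T u, u) \<le> l2norm (adjoint T u) + l2norm u"
    unfolding knorm_def using u T by (simp add: sqrt_sum_squares_le_sum adjoint_l2)
  also have "\<dots> \<le> 2 * l2norm u"
    using contraction_norm_le[OF is_contraction_adjoint[OF T] u] by simp
  finally show ?thesis .
qed

theorem corollary4p11:
  fixes T :: "(nat \<Rightarrow> complex) \<Rightarrow> (nat \<Rightarrow> complex)"
  assumes "is_contraction T" and "cnu T"
  shows "NN T \<subseteq> sorth (AT T) \<and>
         (\<forall>a\<in>sorth (AT T). \<forall>e>0. \<exists>b\<in>NN T. knorm (kdiff a b) < e)"
proof (intro conjI ballI allI impI)
  show "NN T \<subseteq> sorth (AT T)"
    by (rule NN_subset_sorth[OF assms(1)])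
  fix a and e :: real
  assume a: "a \<in> sorth (AT T)" and "e > 0"
  then obtain b0 where b0: "b0 \<in> NN T" and close: "l2norm (snd a - snd b0) < e / 2"
    using snd_NN_dense[OF assms, of "snd a" "e / 2"] by (auto simp: sorth_AT_iff)
  obtain b where "b \<in> NN T" and b: "kdiff a b = (adjoint T (snd a - snd b0), snd a - snd b0)"
    using NN_correction[OF assms(1) a b0] by blast
  have "snd a - snd b0 \<in> l2"
    using a b0 NN_subset_sorth[OF assms(1)] by (auto simp: sorth_AT_iff)
  then have "knorm (kdiff a b) < e"
    using knorm_adjoint_le[OF assms(1)] close b by fastforce
  with \<open>b \<in> NN T\<close> show "\<exists>b\<in>NN T. knorm (kdiff a b) < e"
    by blast
qed

end
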